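(* Let $q\in U(1)$. Let $A(U_{q^{-1},q}(2))$ be the complex $*$-Hopf algebra generated by $a,b,c,d$ and $D^{-1}$, where $D:=ad-q^{-1}bc$, subject to the relations $$ab=q^{-1}ba,\quad cd=q^{-1}dc,\quad ac=qca,\quad bd=qdb,\quad ad=da,\quad bc=q^2cb,\quad DD^{-1}=D^{-1}D=1,$$ with coproduct $\Delta(a)=a\otimes a+b\otimes c$, $\Delta(b)=a\otimes b+b\otimes d$, $\Delta(c)=c\otimes a+d\otimes c$, $\Delta(d)=c\otimes b+d\otimes d$, counit $\varepsilon(a)=\varepsilon(d)=1$, $\varepsilon(b)=\varepsilon(c)=0$, and involution $a^*=S(a)$, $b^*=S(c)$, $c^*=S(b)$, $d^*=S(d)$, where $S$ is the antipode. Put $z=D^{-1}ad$. Then the set of monomials $$D^kz^la^mc^n\ (m>0,n>0);\quad D^kz^la^mb^{-n}\ (m>0,n<0);\quad D^kz^ld^{-m}c^n\ (m<0,n>0);\quad D^kz^ld^{-m}b^{-n}\ (m<0,n<0);$$ $$D^kz^lc^n\ (n>0);\quad D^kz^lb^{-n}\ (n<0);\quad D^kz^la^m\ (m>0);\quad D^kz^ld^{-m}\ (m<0);\quad D^kz^l,$$ where $k,m,n\in\mathbb{Z}$ and $l\in\mathbb{Z}$, $l\ge 0$, is a $\mathbb{C}$-basis of $A(U_{q^{-1},q}(2))$. Moreover, let $I$ be the Hopf ideal of $A(U_{q^{-1},q}(2))$ generated by $\{ab,ac,cd,bd\}$, let $A(DT^2_q):=A(U_{q^{-1},q}(2))/I$,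 and denote the images of $a,b,c,d,D,z$ in the quotient by the same letters. Then the set $$D^ma^n,\quad D^md^n,\quad D^mz,\quad D^mb^n,\quad D^mc^n,\quad D^m(1-z),\qquad m,n\in\mathbb{Z},\ n>0,$$ is a $\mathbb{C}$-basis of $A(DT^2_q)$.
   Context: $A(DT^2_q)$ is called the coordinate ring of the quantum double-torus $DT^2_q$; it is a $*$-Hopf algebra. Note that for $q\in U(1)$ one has $\bar q=q^{-1}$, and $D=ad-q^{-1}bc=da-q^{-1}bc$. *)

theory Defs
  imports Complex_Main
begin

text \<open>The free associative unital complex algebra on the generators a, b, c, d, D^{-1}.
  Elements are finitely supported functions from words (lists of generators) to complex
  numbers; multiplication is concatenation of words extended bilinearly.\<close>

datatype gen = Ga | Gb | Gc | Gd | GDi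

type_synonym fa = "gen list \<Rightarrow> complex"

definition FA :: "fa set" where
  "FA = {f. finite {w. f w \<noteq> 0}}"

definition fa_zero :: fa where "fa_zero = (\<lambda>w. 0)"
definition fa_one :: fa where "fa_one = (\<lambda>w. if w = [] then 1 else 0)"
definition fa_gen :: "gen \<Rightarrow> fa" where "fa_gen x = (\<lambda>w. if w = [x] then 1 else 0)"
definition fa_add :: "fa \<Rightarrow> fa \<Rightarrow> fa" where "fa_add f g = (\<lambda>w. f w + g w)"
definition fa_sub :: "fa \<Rightarrow> fa \<Rightarrow> fa" where "fa_sub f g = (\<lambda>w. f w - g w)"
definition fa_scal :: "complex \<Rightarrow> fa \<Rightarrow> fa" where "fa_scal c f = (\<lambda>w. c * f w)"
definition fa_mult :: "fa \<Rightarrow> fa \<Rightarrow> fa" where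
  "fa_mult f g = (\<lambda>w. \<Sum>i\<le>length w. f (take i w) * g (drop i w))"
definition fa_pow :: "fa \<Rightarrow> nat \<Rightarrow> fa" where
  "fa_pow f n = (fa_mult f ^^ n) fa_one"

inductive_set fa_ideal :: "fa set \<Rightarrow> fa set" for R :: "fa set" where
  base: "r \<in> R \<Longrightarrow> r \<in> fa_ideal R"
| zero: "fa_zero \<in> fa_ideal R"
| add: "x \<in> fa_ideal R \<Longrightarrow> y \<in> fa_ideal R \<Longrightarrow> fa_add x y \<in> fa_ideal R"
| mult: "x \<in> fa_ideal R \<Longrightarrow> u \<in> FA \<Longrightarrow> v \<in> FA \<Longrightarrow> fa_mult (fa_mult u x) v \<in> fa_ideal R"

definition fa_lincomb :: "('i \<Rightarrow> complex) \<Rightarrow> 'i set \<Rightarrow> ('i \<Rightarrow> fa) \<Rightarrow> fa" where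
  "fa_lincomb c T mon = (\<lambda>w. \<Sum>i\<in>T. c i * mon i w)"

text \<open>The images of the family mon (indexed by S) in the quotient FA / J form a
  C-basis of the quotient: they span it and are linearly independent.\<close>
definition basis_mod :: "fa set \<Rightarrow> 'i set \<Rightarrow> ('i \<Rightarrow> fa) \<Rightarrow> bool" where
  "basis_mod J S mon \<longleftrightarrow>
     (\<forall>f\<in>FA. \<exists>c T. finite T \<and> T \<subseteq> S \<and> fa_sub f (fa_lincomb c T mon) \<in> J) \<and>
     (\<forall>c T. finite T \<and> T \<subseteq> S \<and> fa_lincomb c T mon \<in> J \<longrightarrow> (\<forall>i\<in>T. c i = 0))"

abbreviation "ga \<equiv> fa_gen Ga"
abbreviation "gb \<equiv> fa_gen Gb"
abbreviation "gc \<equiv> fa_gen Gc"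
abbreviation "gd \<equiv> fa_gen Gd"
abbreviation "gDi \<equiv> fa_gen GDi"

definition qD :: "complex \<Rightarrow> fa" where
  "qD q = fa_sub (fa_mult ga gd) (fa_scal (inverse q) (fa_mult gb gc))"

definition Urels :: "complex \<Rightarrow> fa set" where
  "Urels q = {
     fa_sub (fa_mult ga gb) (fa_scal (inverse q) (fa_mult gb ga)),
     fa_sub (fa_mult gc gd) (fa_scal (inverse q) (fa_mult gd gc)),
     fa_sub (fa_mult ga gc) (fa_scal q (fa_mult gc ga)),
     fa_sub (fa_mult gb gd) (fa_scal q (fa_mult gd gb)),
     fa_sub (fa_mult ga gd) (fa_mult gd ga),
     fa_sub (fa_mult gb gc) (fa_scal (q^2) (fa_mult gc gb)),
     fa_sub (fa_mult (qD q) gDi) fa_one,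
     fa_sub (fa_mult gDi (qD q)) fa_one }"

definition DTrels :: "fa set" where
  "DTrels = {fa_mult ga gb, fa_mult ga gc, fa_mult gc gd, fa_mult gb gd}"

definition Dpow :: "complex \<Rightarrow> int \<Rightarrow> fa" where
  "Dpow q k = (if k \<ge> 0 then fa_pow (qD q) (nat k) else fa_pow gDi (nat (- k)))"

definition qz :: fa where "qz = fa_mult (fa_mult gDi ga) gd"

definition Xpow :: "int \<Rightarrow> fa" where
  "Xpow m = (if m > 0 then fa_pow ga (nat m) else if m < 0 then fa_pow gd (nat (- m)) else fa_one)"

definition Ypow :: "int \<Rightarrow> fa" where
  "Ypow n = (if n > 0 then fa_pow gc (nat n) else if n < 0 then fa_pow gb (nat (- n)) else fa_one)"

text \<open>The monomials D^k z^l X(m) Y(n); the nine families of the paper are exactly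
  the nine sign patterns of (m,n).\<close>
definition mono1 :: "complex \<Rightarrow> int \<times> nat \<times> int \<times> int \<Rightarrow> fa" where
  "mono1 q = (\<lambda>(k, l, m, n). fa_mult (fa_mult (fa_mult (Dpow q k) (fa_pow qz l)) (Xpow m)) (Ypow n))"

datatype idx2 = IA int nat | ID int nat | IZ int | IB int nat | IC int nat | IZc int

definition S2 :: "idx2 set" where
  "S2 = {IA m n | m n. n > 0} \<union> {ID m n | m n. n > 0} \<union> range IZ \<union>
        {IB m n | m n. n > 0} \<union> {IC m n | m n. n > 0} \<union> range IZc"

definition mono2 :: "complex \<Rightarrow> idx2 \<Rightarrow> fa" where
  "mono2 q i = (case i of
      IA m n \<Rightarrow> fa_mult (Dpow q m) (fa_pow ga n)
    | ID m n \<Rightarrow> fa_mult (Dpow q m) (fa_pow gd n)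
    | IZ m \<Rightarrow> fa_mult (Dpow q m) qz
    | IB m n \<Rightarrow> fa_mult (Dpow q m) (fa_pow gb n)
    | IC m n \<Rightarrow> fa_mult (Dpow q m) (fa_pow gc n)
    | IZc m \<Rightarrow> fa_mult (Dpow q m) (fa_sub fa_one qz))"

end

theory Submission
  imports Defs "HOL-Library.Poly_Mapping"
begin

text \<open>Spanning: modulo the relations, \<open>ad = Dz\<close>, \<open>bc = q(Dz - D)\<close>, and \<open>D\<close>, \<open>D\<^sup>-\<^sup>1\<close> and \<open>z\<close>
  q-commute with every generator. Hence left multiplication by a generator sends a monomial
  \<open>D\<^sup>k z\<^sup>l X(m) Y(n)\<close> (with \<open>X(m) = a\<^sup>m\<close> or \<open>d\<^sup>-\<^sup>m\<close>, \<open>Y(n) = c\<^sup>n\<close> or \<open>b\<^sup>-\<^sup>n\<close>) into the span of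
  such monomials, and by induction on words they span the algebra.
  Independence: the same reduction rules, read as formulas on coefficient vectors indexed by
  \<open>(k, l, m, n)\<close>, define an action of the generators that satisfies the relations and sends the
  vector \<open>e\<^sub>0\<close> under each monomial to its own unit vector; so no nontrivial combination of
  monomials lies in the ideal.
  In \<open>A(DT\<^sup>2\<^sub>q)\<close> the extra relations kill the monomials with \<open>m \<noteq> 0 \<noteq> n\<close> and make \<open>z\<close> an
  idempotent with \<open>az = a\<close>, \<open>dz = d\<close>, \<open>zb = zc = 0\<close>, which collapses the monomials to the listed
  ones; independence uses an action on two copies of \<open>\<int>\<^sup>2\<close>, the images of \<open>z\<close> and \<open>1 - z\<close>.\<close>

section \<open>The free algebra as a monoid algebra\<close>

text \<open>Words form a monoid under concatenation, so \<open>gen list \<Rightarrow>\<^sub>0 complex\<close> is the free algebra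
  \<open>FA\<close> with its ring structure.\<close>

instantiation list :: (type) monoid_add
begin
definition zero_list :: "'a list" where "zero_list = []"
definition plus_list :: "'a list \<Rightarrow> 'a list \<Rightarrow> 'a list" where "plus_list = append"
instance by standard (auto simp: zero_list_def plus_list_def)
end

lemma plus_list_eq_append [simp]: "u + v = u @ v"
  by (simp add: plus_list_def)

lemma zero_list_eq_Nil [simp]: "0 = []"
  by (simp add: zero_list_def)

abbreviation lookup :: "('a \<Rightarrow>\<^sub>0 'b::zero) \<Rightarrow> 'a \<Rightarrow> 'b" where "lookup \<equiv> Poly_Mapping.lookup"
abbreviation keys :: "('a \<Rightarrow>\<^sub>0 'b::zero) \<Rightarrow> 'a set" where "keys \<equiv> Poly_Mapping.keys"
abbreviation single :: "'a \<Rightarrow> 'b \<Rightarrow> 'a \<Rightarrow>\<^sub>0 'b::zero" where "single \<equiv> Poly_Mapping.single"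

type_synonym free_alg = "gen list \<Rightarrow>\<^sub>0 complex"

definition alg_of :: "fa \<Rightarrow> free_alg" where
  "alg_of f = Abs_poly_mapping f"

lemma lookup_alg_of [simp]: "f \<in> FA \<Longrightarrow> lookup (alg_of f) = f"
  by (simp add: alg_of_def FA_def)

lemma lookup_in_FA [simp]: "lookup p \<in> FA"
  by (simp add: FA_def)

lemma alg_of_lookup [simp]: "alg_of (lookup p) = p"
  by (simp add: alg_of_def lookup_inverse)

lemma Sum_any_split_list:
  fixes F :: "'a list \<Rightarrow> 'a list \<Rightarrow> complex"
  shows "(\<Sum>(u, v). F u v when w = u + v) = (\<Sum>i\<le>length w. F (take i w) (drop i w))"
proof -
  let ?S = "(\<lambda>i. (take i w, drop i w)) ` {..length w}"
  have "{p. (case p of (u, v) \<Rightarrow> F u v when w = u + v) \<noteq> 0} \<subseteq> ?S"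
  proof
    fix p assume "p \<in> {p. (case p of (u, v) \<Rightarrow> F u v when w = u + v) \<noteq> 0}"
    then obtain u v where "p = (u, v)" "w = u @ v"
      by (cases p) (auto simp: when_def split: if_splits)
    then show "p \<in> ?S"
      by (auto intro!: image_eqI[of _ _ "length u"])
  qed
  then have "(\<Sum>(u, v). F u v when w = u + v) = (\<Sum>(u, v)\<in>?S. F u v when w = u + v)"
    by (intro Sum_any.expand_superset) auto
  also have "inj_on (\<lambda>i. (take i w, drop i w)) {..length w}"
    by (rule inj_onI) (metis Pair_inject atMost_iff length_take min.absorb2)
  then have "(\<Sum>(u, v)\<in>?S. F u v when w = u + v) = (\<Sum>i\<le>length w. F (take i w) (drop i w))"
    by (simp add: sum.reindex when_def)
  finally show ?thesis .
qed

lemma lookup_times: "lookup (p * r) = fa_mult (lookup p) (lookup r)"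
proof -
  have "lookup (p * r) = (\<lambda>w. \<Sum>(u, v). lookup p u * lookup r v when w = u + v)"
    by (rule ext, unfold times_poly_mapping.rep_eq, rule prod_fun_unfold_prod) auto
  then show ?thesis
    by (simp only: fa_mult_def Sum_any_split_list)
qed

lemma fa_mult_eq: "f \<in> FA \<Longrightarrow> g \<in> FA \<Longrightarrow> fa_mult f g = lookup (alg_of f * alg_of g)"
  by (simp add: lookup_times)

lemma fa_add_eq: "f \<in> FA \<Longrightarrow> g \<in> FA \<Longrightarrow> fa_add f g = lookup (alg_of f + alg_of g)"
  by (simp add: fa_add_def lookup_add fun_eq_iff)

lemma fa_sub_eq: "f \<in> FA \<Longrightarrow> g \<in> FA \<Longrightarrow> fa_sub f g = lookup (alg_of f - alg_of g)"
  by (simp add: fa_sub_def lookup_minus fun_eq_iff)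

lemma fa_one_eq: "fa_one = lookup 1"
  by (auto simp: lookup_one fa_one_def when_def)

lemma fa_zero_eq: "fa_zero = lookup 0"
  by (auto simp: fa_zero_def)

lemma fa_gen_eq: "fa_gen x = lookup (single [x] 1)"
  by (auto simp: lookup_single fa_gen_def when_def)

definition smult :: "complex \<Rightarrow> free_alg \<Rightarrow> free_alg" where
  "smult c x = single [] c * x"

lemma lookup_smult [simp]: "lookup (smult c x) w = c * lookup x w"
proof -
  have "smult c x = Poly_Mapping.map ((*) c) x"
    by (simp add: smult_def mult_map_scale_conv_mult)
  then show ?thesis
    by (simp add: map.rep_eq when_def)
qed

lemma fa_scal_eq: "f \<in> FA \<Longrightarrow> fa_scal c f = lookup (smult c (alg_of f))"
  by (simp add: fa_scal_def fun_eq_iff)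

lemma fa_pow_Suc: "fa_pow f (Suc n) = fa_mult f (fa_pow f n)"
  by (simp add: fa_pow_def)

lemma FA_closed [simp]:
  "fa_zero \<in> FA" "fa_one \<in> FA" "fa_gen x \<in> FA"
  "f \<in> FA \<Longrightarrow> g \<in> FA \<Longrightarrow> fa_mult f g \<in> FA"
  "f \<in> FA \<Longrightarrow> g \<in> FA \<Longrightarrow> fa_add f g \<in> FA"
  "f \<in> FA \<Longrightarrow> g \<in> FA \<Longrightarrow> fa_sub f g \<in> FA"
  "f \<in> FA \<Longrightarrow> fa_scal c f \<in> FA"
  "f \<in> FA \<Longrightarrow> fa_pow f n \<in> FA"
proof -
  show "f \<in> FA \<Longrightarrow> fa_pow f n \<in> FA"
    by (induct n) (simp_all add: fa_pow_def fa_one_eq fa_mult_eq)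
qed (simp_all add: fa_zero_eq fa_one_eq fa_gen_eq fa_mult_eq fa_add_eq fa_sub_eq fa_scal_eq)

lemma alg_of_ops:
  "alg_of fa_zero = 0" "alg_of fa_one = 1"
  "f \<in> FA \<Longrightarrow> g \<in> FA \<Longrightarrow> alg_of (fa_mult f g) = alg_of f * alg_of g"
  "f \<in> FA \<Longrightarrow> g \<in> FA \<Longrightarrow> alg_of (fa_add f g) = alg_of f + alg_of g"
  "f \<in> FA \<Longrightarrow> g \<in> FA \<Longrightarrow> alg_of (fa_sub f g) = alg_of f - alg_of g"
  "f \<in> FA \<Longrightarrow> alg_of (fa_scal c f) = smult c (alg_of f)"
  "f \<in> FA \<Longrightarrow> alg_of (fa_pow f n) = alg_of f ^ n"
proof -
  show "f \<in> FA \<Longrightarrow> alg_of (fa_pow f n) = alg_of f ^ n"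
    by (induct n) (simp_all add: fa_pow_Suc fa_mult_eq, simp add: fa_pow_def fa_one_eq)
qed (simp_all add: fa_zero_eq fa_one_eq fa_gen_eq fa_mult_eq fa_add_eq fa_sub_eq fa_scal_eq)

lemma fa_lincomb_eq:
  assumes "finite T" "\<And>i. mon i \<in> FA"
  shows "fa_lincomb c T mon = lookup (\<Sum>i\<in>T. smult (c i) (alg_of (mon i)))"
  using assms by (simp add: fa_lincomb_def fun_eq_iff lookup_sum)

lemma free_alg_as_sum: "p = (\<Sum>w\<in>keys p. single w (lookup p w))"
  by (rule poly_mapping_eqI) (simp add: lookup_sum lookup_single when_def in_keys_iff sum.delta)

lemma single_word_Cons: "single (g # w) c = single [g] 1 * (single w c :: free_alg)"
  by (simp add: mult_single)

lemma single_Nil_one [simp]: "single [] 1 = (1 :: free_alg)"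
  using single_one[where 'a = "gen list" and 'b = complex] by (simp only: zero_list_eq_Nil)

lemma single_Nil_central: "single [] c * x = x * single [] c" for x :: free_alg
proof (rule poly_mapping_eqI)
  fix w
  have "lookup (x * single [] c) w = (\<Sum>i\<le>length w. if i = length w then lookup x w * c else 0)"
    unfolding lookup_times fa_mult_def by (rule sum.cong) (auto simp: lookup_single when_def)
  then show "lookup (single [] c * x) w = lookup (x * single [] c) w"
    using lookup_smult[of c x w] by (simp add: smult_def mult.commute)
qed

lemma smult_single: "smult c (single w d) = single w (c * d)"
  by (simp add: smult_def mult_single)

lemma mult_smult [simp]: "x * smult c y = smult c (x * y)"
  by (simp add: smult_def single_Nil_central mult.assoc)

lemma smult_mult [simp]: "smult c x * y = smult c (x * y)"
  by (simp add: smult_def mult.assoc)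

lemma smult_smult [simp]: "smult a (smult b x) = smult (a * b) x"
  by (simp add: smult_def mult.assoc[symmetric] mult_single)

lemma smult_one [simp]: "smult 1 x = x"
  by (simp add: smult_def)

lemma smult_0_left [simp]: "smult 0 x = 0"
  by (simp add: smult_def)

lemma smult_0_right [simp]: "smult c 0 = 0"
  by (simp add: smult_def)

lemma smult_minus_one: "smult (- 1) x = - x"
  by (rule poly_mapping_eqI) simp

lemma smult_distribs:
  "smult c (x + y) = smult c x + smult c y" "smult c (x - y) = smult c x - smult c y"
  "smult (a + b) x = smult a x + smult b x"
  "smult c (\<Sum>i\<in>T. f i) = (\<Sum>i\<in>T. smult c (f i))"
  by (simp_all add: smult_def algebra_simps single_add sum_distrib_left)

section \<open>Two-sided ideals and spanning modulo an ideal\<close>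

inductive_set ideal_gen :: "'a::ring_1 set \<Rightarrow> 'a set" for R :: "'a set" where
  base: "r \<in> R \<Longrightarrow> r \<in> ideal_gen R"
| zero: "0 \<in> ideal_gen R"
| add: "x \<in> ideal_gen R \<Longrightarrow> y \<in> ideal_gen R \<Longrightarrow> x + y \<in> ideal_gen R"
| mult: "x \<in> ideal_gen R \<Longrightarrow> u * x * v \<in> ideal_gen R"

lemma lookup_in_fa_ideal:
  assumes "x \<in> ideal_gen (alg_of ` R)" "R \<subseteq> FA"
  shows "lookup x \<in> fa_ideal R"
  using assms(1)
proof induct
  case (base r)
  then obtain f where "f \<in> R" "r = alg_of f"
    by blast
  with assms(2) show ?case
    using fa_ideal.base[of f R] by auto
next
  case zero
  show ?case
    using fa_ideal.zero[of R] by (simp add: fa_zero_def)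
next
  case (add x y)
  then show ?case
    using fa_ideal.add by (fastforce simp: fa_add_eq)
next
  case (mult x u v)
  then show ?case
    using fa_ideal.mult[of "lookup x" R "lookup u" "lookup v"] by (simp add: fa_mult_eq)
qed

lemma alg_of_in_ideal_gen:
  assumes "f \<in> fa_ideal R" "R \<subseteq> FA"
  shows "alg_of f \<in> ideal_gen (alg_of ` R)"
proof -
  from assms(1) have "f \<in> FA \<and> alg_of f \<in> ideal_gen (alg_of ` R)"
  proof induct
    case (base r)
    with assms(2) show ?case
      by (auto intro: ideal_gen.base)
  qed (auto simp: alg_of_ops intro: ideal_gen.intros)
  then show ?thesis ..
qed

lemma ideal_gen_uminus: "x \<in> ideal_gen R \<Longrightarrow> - x \<in> ideal_gen R"
  using ideal_gen.mult[of x R "- 1" 1] by simp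

lemma ideal_gen_lmult: "x \<in> ideal_gen R \<Longrightarrow> u * x \<in> ideal_gen R"
  using ideal_gen.mult[of x R u 1] by simp

lemma ideal_gen_rmult: "x \<in> ideal_gen R \<Longrightarrow> x * v \<in> ideal_gen R"
  using ideal_gen.mult[of x R 1 v] by simp

definition equiv_mod :: "'a::ring_1 set \<Rightarrow> 'a \<Rightarrow> 'a \<Rightarrow> bool" where
  "equiv_mod R x y \<longleftrightarrow> x - y \<in> ideal_gen R"

lemma equiv_mod_refl [simp, intro]: "equiv_mod R x x"
  by (simp add: equiv_mod_def ideal_gen.zero)

lemma equiv_mod_sym: "equiv_mod R x y \<Longrightarrow> equiv_mod R y x"
  unfolding equiv_mod_def using ideal_gen_uminus by fastforce

lemma equiv_mod_trans [trans]: "equiv_mod R x y \<Longrightarrow> equiv_mod R y z \<Longrightarrow> equiv_mod R x z"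
  unfolding equiv_mod_def using ideal_gen.add by fastforce

lemma equiv_mod_add: "equiv_mod R x x' \<Longrightarrow> equiv_mod R y y' \<Longrightarrow> equiv_mod R (x + y) (x' + y')"
  unfolding equiv_mod_def using ideal_gen.add by (fastforce simp: algebra_simps)

lemma equiv_mod_diff: "equiv_mod R x x' \<Longrightarrow> equiv_mod R y y' \<Longrightarrow> equiv_mod R (x - y) (x' - y')"
  unfolding equiv_mod_def using ideal_gen.add ideal_gen_uminus by (fastforce simp: algebra_simps)

lemma equiv_mod_mult:
  assumes "equiv_mod R x x'" "equiv_mod R y y'"
  shows "equiv_mod R (x * y) (x' * y')"
proof -
  have "(x - x') * y + x' * (y - y') \<in> ideal_gen R"
    using assms unfolding equiv_mod_def by (intro ideal_gen.add ideal_gen_lmult ideal_gen_rmult)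
  then show ?thesis
    by (simp add: equiv_mod_def algebra_simps)
qed

lemma equiv_mod_lmult: "equiv_mod R x y \<Longrightarrow> equiv_mod R (u * x) (u * y)"
  by (simp add: equiv_mod_mult)

lemma equiv_mod_rmult: "equiv_mod R x y \<Longrightarrow> equiv_mod R (x * v) (y * v)"
  by (simp add: equiv_mod_mult)

lemma equiv_mod_smult: "equiv_mod R x y \<Longrightarrow> equiv_mod R (smult c x) (smult c y)"
  unfolding smult_def by (rule equiv_mod_lmult)

definition span_mod :: "free_alg set \<Rightarrow> 'i set \<Rightarrow> ('i \<Rightarrow> free_alg) \<Rightarrow> free_alg \<Rightarrow> bool" where
  "span_mod R S F x \<longleftrightarrow> (\<exists>c T. finite T \<and> T \<subseteq> S \<and> equiv_mod R x (\<Sum>i\<in>T. smult (c i) (F i)))"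

lemma span_modI:
  "finite T \<Longrightarrow> T \<subseteq> S \<Longrightarrow> equiv_mod R x (\<Sum>i\<in>T. smult (c i) (F i)) \<Longrightarrow> span_mod R S F x"
  unfolding span_mod_def by (intro exI[of _ c] exI[of _ T]) simp

lemma span_modE:
  assumes "span_mod R S F x"
  obtains c T where "finite T" "T \<subseteq> S" "equiv_mod R x (\<Sum>i\<in>T. smult (c i) (F i))"
  using assms unfolding span_mod_def by blast

lemma span_mod_base: "i \<in> S \<Longrightarrow> span_mod R S F (F i)"
  by (rule span_modI[of "{i}" _ _ _ "\<lambda>_. 1"]) simp_all

lemma span_mod_zero: "span_mod R S F 0"
  by (rule span_modI[of "{}" _ _ _ "\<lambda>_. 0"]) simp_all

lemma span_mod_equiv: "equiv_mod R x y \<Longrightarrow> span_mod R S F y \<Longrightarrow> span_mod R S F x"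
proof -
  assume "equiv_mod R x y" "span_mod R S F y"
  then show ?thesis
    unfolding span_mod_def using equiv_mod_trans by meson
qed

lemma span_mod_smult: "span_mod R S F x \<Longrightarrow> span_mod R S F (smult a x)"
proof (elim span_modE)
  fix c T assume T: "finite T" "T \<subseteq> S" "equiv_mod R x (\<Sum>i\<in>T. smult (c i) (F i))"
  then have "equiv_mod R (smult a x) (\<Sum>i\<in>T. smult (a * c i) (F i))"
    using equiv_mod_smult[OF T(3), of a] by (simp add: smult_distribs)
  with T(1,2) show ?thesis
    by (rule span_modI)
qed

lemma span_mod_add:
  assumes "span_mod R S F x" "span_mod R S F y"
  shows "span_mod R S F (x + y)"
proof -
  obtain c1 T1 where T1: "finite T1" "T1 \<subseteq> S" "equiv_mod R x (\<Sum>i\<in>T1. smult (c1 i) (F i))"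
    using assms(1) by (rule span_modE)
  obtain c2 T2 where T2: "finite T2" "T2 \<subseteq> S" "equiv_mod R y (\<Sum>i\<in>T2. smult (c2 i) (F i))"
    using assms(2) by (rule span_modE)
  let ?ext = "\<lambda>c T i. if i \<in> T then c i else 0"
  have "(\<Sum>i\<in>T1. smult (c1 i) (F i)) = (\<Sum>i\<in>T1 \<union> T2. smult (?ext c1 T1 i) (F i))"
    "(\<Sum>i\<in>T2. smult (c2 i) (F i)) = (\<Sum>i\<in>T1 \<union> T2. smult (?ext c2 T2 i) (F i))"
    using T1(1) T2(1) by (auto intro: sum.mono_neutral_cong_left)
  with equiv_mod_add[OF T1(3) T2(3)]
  have "equiv_mod R (x + y) (\<Sum>i\<in>T1 \<union> T2. smult (?ext c1 T1 i + ?ext c2 T2 i) (F i))"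
    by (simp add: smult_distribs sum.distrib)
  moreover have "finite (T1 \<union> T2)" "T1 \<union> T2 \<subseteq> S"
    using T1(1,2) T2(1,2) by auto
  ultimately show ?thesis
    by (intro span_modI)
qed

lemma span_mod_diff: "span_mod R S F x \<Longrightarrow> span_mod R S F y \<Longrightarrow> span_mod R S F (x - y)"
  using span_mod_add[of R S F x "smult (- 1) y"] span_mod_smult[of R S F y "- 1"]
  by (simp add: smult_minus_one)

lemma span_mod_sum: "finite T \<Longrightarrow> (\<And>i. i \<in> T \<Longrightarrow> span_mod R S F (f i)) \<Longrightarrow> span_mod R S F (\<Sum>i\<in>T. f i)"
  by (induct rule: finite_induct) (auto intro: span_mod_add span_mod_zero)

lemma span_mod_trans:
  assumes "span_mod R S F x" "\<And>i. i \<in> S \<Longrightarrow> span_mod R S' G (F i)"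
  shows "span_mod R S' G x"
proof -
  obtain c T where T: "finite T" "T \<subseteq> S" "equiv_mod R x (\<Sum>i\<in>T. smult (c i) (F i))"
    using assms(1) by (rule span_modE)
  have "span_mod R S' G (\<Sum>i\<in>T. smult (c i) (F i))"
    using T(1,2) assms(2) by (intro span_mod_sum span_mod_smult) auto
  with T(3) show ?thesis
    by (rule span_mod_equiv)
qed

lemma span_mod_lmult:
  assumes "\<And>i. i \<in> S \<Longrightarrow> span_mod R S F (u * F i)" "span_mod R S F x"
  shows "span_mod R S F (u * x)"
proof -
  obtain c T where T: "finite T" "T \<subseteq> S" "equiv_mod R x (\<Sum>i\<in>T. smult (c i) (F i))"
    using assms(2) by (rule span_modE)
  have "equiv_mod R (u * x) (\<Sum>i\<in>T. smult (c i) (u * F i))"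
    using equiv_mod_lmult[OF T(3), of u] by (simp add: sum_distrib_left)
  with T(1,2) have "span_mod R S (\<lambda>i. u * F i) (u * x)"
    by (rule span_modI)
  then show ?thesis
    using assms(1) by (rule span_mod_trans)
qed

lemma span_mod_all:
  assumes "span_mod R S F 1" "\<And>g i. i \<in> S \<Longrightarrow> span_mod R S F (single [g] 1 * F i)"
  shows "span_mod R S F p"
proof -
  have words: "span_mod R S F (single w 1)" for w
  proof (induct w)
    case Nil
    show ?case
      using assms(1) by simp
  next
    case (Cons g w)
    show ?case
      by (subst single_word_Cons) (rule span_mod_lmult[OF assms(2) Cons])
  qed
  have "p = (\<Sum>w\<in>keys p. smult (lookup p w) (single w 1))"
    by (simp only: smult_single mult_1_right flip: free_alg_as_sum)
  also have "span_mod R S F \<dots>"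
    by (intro span_mod_sum span_mod_smult words) simp
  finally show ?thesis .
qed

section \<open>Linear actions of the free algebra\<close>

type_synonym 'i vec = "'i \<Rightarrow> complex"

definition linop :: "('i vec \<Rightarrow> 'j vec) \<Rightarrow> bool" where
  "linop T \<longleftrightarrow> (\<forall>y z. T (\<lambda>x. y x + z x) = (\<lambda>x. T y x + T z x)) \<and>
                 (\<forall>c y. T (\<lambda>x. c * y x) = (\<lambda>x. c * T y x))"

lemma linop_add: "linop T \<Longrightarrow> T (\<lambda>x. y x + z x) = (\<lambda>x. T y x + T z x)"
  by (simp add: linop_def)

lemma linop_scale: "linop T \<Longrightarrow> T (\<lambda>x. c * y x) = (\<lambda>x. c * T y x)"
  by (simp add: linop_def)

lemma linop_zero: "linop T \<Longrightarrow> T (\<lambda>x. 0) = (\<lambda>x. 0)"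
  using linop_scale[of T 0 "\<lambda>x. 0"] by simp

lemma linop_sum:
  assumes "linop T" "finite S"
  shows "T (\<lambda>x. \<Sum>j\<in>S. c j * y j x) = (\<lambda>x. \<Sum>j\<in>S. c j * T (y j) x)"
  using assms(2)
proof induct
  case empty
  then show ?case
    using linop_zero[OF assms(1)] by simp
next
  case (insert j S)
  then show ?case
    using linop_add[OF assms(1), of "\<lambda>x. c j * y j x"] linop_scale[OF assms(1)] by simp
qed

primrec word_op :: "(gen \<Rightarrow> 'i vec \<Rightarrow> 'i vec) \<Rightarrow> gen list \<Rightarrow> 'i vec \<Rightarrow> 'i vec" where
  "word_op ops [] y = y"
| "word_op ops (g # w) y = ops g (word_op ops w y)"

lemma word_op_append: "word_op ops (u @ v) y = word_op ops u (word_op ops v y)"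
  by (induct u) auto

lemma linop_word_op: "(\<And>g. linop (ops g)) \<Longrightarrow> linop (word_op ops w)"
  by (induct w) (simp_all add: linop_def)

definition rep :: "(gen \<Rightarrow> 'i vec \<Rightarrow> 'i vec) \<Rightarrow> free_alg \<Rightarrow> 'i vec \<Rightarrow> 'i vec" where
  "rep ops p y = (\<lambda>x. \<Sum>w\<in>keys p. lookup p w * word_op ops w y x)"

lemma rep_superset:
  assumes "finite S" "keys p \<subseteq> S"
  shows "rep ops p y = (\<lambda>x. \<Sum>w\<in>S. lookup p w * word_op ops w y x)"
  unfolding rep_def
  by (rule ext, rule sum.mono_neutral_left) (use assms in \<open>auto simp: in_keys_iff\<close>)

lemma rep_add: "rep ops (p + r) y = (\<lambda>x. rep ops p y x + rep ops r y x)"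
proof -
  have "finite (keys p \<union> keys r)" "keys (p + r) \<subseteq> keys p \<union> keys r"
    by (simp_all add: keys_add)
  then show ?thesis
    using rep_superset[of "keys p \<union> keys r" p ops y] rep_superset[of "keys p \<union> keys r" r ops y]
      rep_superset[of "keys p \<union> keys r" "p + r" ops y]
    by (simp add: lookup_add algebra_simps sum.distrib)
qed

lemma rep_zero: "rep ops 0 y = (\<lambda>x. 0)"
  by (simp add: rep_def)

lemma rep_sum: "finite S \<Longrightarrow> rep ops (\<Sum>j\<in>S. p j) y = (\<lambda>x. \<Sum>j\<in>S. rep ops (p j) y x)"
  by (induct rule: finite_induct) (auto simp: rep_zero rep_add)

lemma rep_single: "rep ops (single w c) y = (\<lambda>x. c * word_op ops w y x)"
  using rep_superset[of "{w}" "single w c" ops y] by (simp add: lookup_single)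

lemma rep_gen: "rep ops (single [g] 1) y = ops g y"
  by (simp add: rep_single)

lemma rep_one: "rep ops 1 y = y"
  using rep_single[of ops "[]" 1 y] by simp

lemma linop_rep:
  assumes "\<And>g. linop (ops g)"
  shows "linop (rep ops p)"
  unfolding linop_def rep_def
  by (simp add: linop_add[OF linop_word_op[OF assms]] linop_scale[OF linop_word_op[OF assms]]
      sum.distrib sum_distrib_left algebra_simps)

lemma rep_mult:
  assumes lin: "\<And>g. linop (ops g)"
  shows "rep ops (p * r) y = rep ops p (rep ops r y)"
proof -
  have "p * r = (\<Sum>u\<in>keys p. \<Sum>v\<in>keys r. single (u @ v) (lookup p u * lookup r v))"
    by (subst free_alg_as_sum, subst (2) free_alg_as_sum)
      (simp add: sum_distrib_left sum_distrib_right mult_single, rule sum.swap)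
  then have "rep ops (p * r) y =
      (\<lambda>x. \<Sum>u\<in>keys p. \<Sum>v\<in>keys r. lookup p u * lookup r v * word_op ops (u @ v) y x)"
    by (simp add: rep_sum rep_single)
  also have "\<dots> = rep ops p (rep ops r y)"
    using linop_sum[OF linop_word_op[OF lin], of "keys r"]
    by (simp add: rep_def word_op_append sum_distrib_left algebra_simps)
  finally show ?thesis .
qed

lemma rep_smult: "rep ops (smult c p) y = (\<lambda>x. c * rep ops p y x)"
proof -
  have "keys (smult c p) \<subseteq> keys p"
    by (auto simp: in_keys_iff)
  then show ?thesis
    using rep_superset[of "keys p" "smult c p"] by (simp add: rep_def sum_distrib_left algebra_simps)
qed

lemma rep_diff: "rep ops (p - r) y = (\<lambda>x. rep ops p y x - rep ops r y x)"
  using rep_add[of ops p "smult (- 1) r" y] rep_smult[of ops "- 1" r y]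
  by (simp add: smult_minus_one)

lemma rep_pow: "(\<And>g. linop (ops g)) \<Longrightarrow> rep ops (p ^ n) y = (rep ops p ^^ n) y"
  by (induct n arbitrary: y) (simp_all add: rep_one rep_mult)

lemma rep_vanishes_on_ideal_gen:
  assumes lin: "\<And>g. linop (ops g)"
    and R: "\<And>r y. r \<in> R \<Longrightarrow> rep ops r y = (\<lambda>x. 0)"
    and x: "x \<in> ideal_gen R"
  shows "rep ops x y = (\<lambda>x. 0)"
  using x
proof (induct arbitrary: y)
  case (mult x u v)
  then show ?case
    by (simp add: rep_mult[OF lin] linop_zero[OF linop_rep[OF lin]])
qed (simp_all add: R rep_zero rep_add)

definition unit_vec :: "'i \<Rightarrow> 'i vec" where
  "unit_vec i = (\<lambda>x. if x = i then 1 else 0)"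

lemma coeff_eq_0_if_separating_action:
  assumes lin: "\<And>g. linop (ops g)"
    and kills: "\<And>r y. r \<in> R \<Longrightarrow> rep ops r y = (\<lambda>x. 0)"
    and sep: "\<And>i. i \<in> S \<Longrightarrow> \<exists>s. s \<noteq> 0 \<and> rep ops (F i) v = (\<lambda>x. s * unit_vec (pos i) x)"
    and inj: "inj_on pos S"
    and T: "finite T" "T \<subseteq> S" "(\<Sum>i\<in>T. smult (c i) (F i)) \<in> ideal_gen R"
    and j: "j \<in> T"
  shows "c j = 0"
proof -
  define s where "s i = (SOME s. s \<noteq> 0 \<and> rep ops (F i) v = (\<lambda>x. s * unit_vec (pos i) x))" for i
  have s: "s i \<noteq> 0" "rep ops (F i) v = (\<lambda>x. s i * unit_vec (pos i) x)" if "i \<in> S" for i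
    using someI_ex[OF sep[OF that]] by (simp_all add: s_def)
  have "0 = rep ops (\<Sum>i\<in>T. smult (c i) (F i)) v (pos j)"
    using rep_vanishes_on_ideal_gen[OF lin kills T(3)] by simp
  also have "\<dots> = (\<Sum>i\<in>T. c i * (s i * unit_vec (pos i) (pos j)))"
    using T(1,2) by (auto simp: rep_sum rep_smult s(2) intro!: sum.cong)
  also have "\<dots> = (\<Sum>i\<in>T. if i = j then c j * s j else 0)"
    using T(2) j inj by (intro sum.cong) (auto simp: unit_vec_def subset_iff dest: inj_onD)
  also have "\<dots> = c j * s j"
    using T(1) j by simp
  finally show ?thesis
    using s(1)[of j] T(2) j by auto
qed

lemma basis_modI:
  assumes R: "R \<subseteq> FA" and mon: "\<And>i. mon i \<in> FA"
    and span: "\<And>p. span_mod (alg_of ` R) S (\<lambda>i. alg_of (mon i)) p"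
    and lin: "\<And>g. linop (ops g)"
    and kills: "\<And>r y. r \<in> alg_of ` R \<Longrightarrow> rep ops r y = (\<lambda>x. 0)"
    and sep: "\<And>i. i \<in> S \<Longrightarrow> \<exists>s. s \<noteq> 0 \<and> rep ops (alg_of (mon i)) v = (\<lambda>x. s * unit_vec (pos i) x)"
    and inj: "inj_on pos S"
  shows "basis_mod (fa_ideal R) S mon"
  unfolding basis_mod_def
proof safe
  fix f assume "f \<in> FA"
  obtain c T where T: "finite T" "T \<subseteq> S"
    "equiv_mod (alg_of ` R) (alg_of f) (\<Sum>i\<in>T. smult (c i) (alg_of (mon i)))"
    using span by (rule span_modE)
  then have "lookup (alg_of f - (\<Sum>i\<in>T. smult (c i) (alg_of (mon i)))) \<in> fa_ideal R"
    by (intro lookup_in_fa_ideal R) (simp add: equiv_mod_def)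
  then have "fa_sub f (fa_lincomb c T mon) \<in> fa_ideal R"
    using \<open>f \<in> FA\<close> by (simp add: fa_lincomb_eq T(1) mon fa_sub_eq)
  with T(1,2) show "\<exists>c T. finite T \<and> T \<subseteq> S \<and> fa_sub f (fa_lincomb c T mon) \<in> fa_ideal R"
    by blast
next
  fix c T i
  assume T: "finite T" "T \<subseteq> S" "fa_lincomb c T mon \<in> fa_ideal R" and i: "i \<in> T"
  have "(\<Sum>i\<in>T. smult (c i) (alg_of (mon i))) \<in> ideal_gen (alg_of ` R)"
    using alg_of_in_ideal_gen[OF T(3) R] by (simp add: fa_lincomb_eq T(1) mon)
  with T(1,2) i show "c i = 0"
    by (intro coeff_eq_0_if_separating_action[OF lin kills sep inj]) auto
qed

section \<open>q-commutation modulo an ideal\<close>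

definition qcomm :: "free_alg set \<Rightarrow> free_alg \<Rightarrow> free_alg \<Rightarrow> complex \<Rightarrow> bool" where
  "qcomm R x y \<alpha> \<longleftrightarrow> equiv_mod R (x * y) (smult \<alpha> (y * x))"

lemma qcomm_refl: "qcomm R x x 1"
  by (simp add: qcomm_def)

lemma qcomm_one_right: "qcomm R x 1 1"
  by (simp add: qcomm_def)

lemma qcomm_one_left: "qcomm R 1 x 1"
  by (simp add: qcomm_def)

lemma qcomm_flip:
  assumes "qcomm R x y \<alpha>" "\<alpha> \<noteq> 0"
  shows "qcomm R y x (inverse \<alpha>)"
proof -
  have "y * x = smult (inverse \<alpha>) (smult \<alpha> (y * x))"
    using assms(2) by simp
  also have "equiv_mod R \<dots> (smult (inverse \<alpha>) (x * y))"
    using assms(1) unfolding qcomm_def by (intro equiv_mod_smult) (rule equiv_mod_sym)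
  finally show ?thesis
    by (simp add: qcomm_def)
qed

lemma qcomm_push: "qcomm R x y \<alpha> \<Longrightarrow> equiv_mod R (x * (y * w)) (smult \<alpha> (y * (x * w)))"
  unfolding qcomm_def by (drule equiv_mod_rmult[of _ _ _ w]) (simp add: mult.assoc)

lemma qcomm_mult_right:
  assumes "qcomm R x y1 \<alpha>" "qcomm R x y2 \<beta>"
  shows "qcomm R x (y1 * y2) (\<alpha> * \<beta>)"
proof -
  have "equiv_mod R (x * (y1 * y2)) (smult \<alpha> (y1 * (x * y2)))"
    using assms(1) by (rule qcomm_push)
  also have "equiv_mod R \<dots> (smult \<alpha> (y1 * smult \<beta> (y2 * x)))"
    using assms(2) unfolding qcomm_def by (intro equiv_mod_smult equiv_mod_lmult)
  finally show ?thesis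
    by (simp add: qcomm_def mult.assoc)
qed

lemma qcomm_mult_left:
  assumes "qcomm R x1 y \<alpha>" "qcomm R x2 y \<beta>"
  shows "qcomm R (x1 * x2) y (\<alpha> * \<beta>)"
proof -
  have "x1 * x2 * y = x1 * (x2 * y)"
    by (simp add: mult.assoc)
  also have "equiv_mod R \<dots> (smult \<beta> ((x1 * y) * x2))"
    using equiv_mod_lmult[OF assms(2)[unfolded qcomm_def], of x1] by (simp add: mult.assoc)
  also have "equiv_mod R \<dots> (smult \<beta> (smult \<alpha> (y * x1) * x2))"
    using assms(1) unfolding qcomm_def by (intro equiv_mod_smult equiv_mod_rmult)
  finally show ?thesis
    by (simp add: qcomm_def mult.assoc mult.commute)
qed

lemma qcomm_diff_right:
  assumes "qcomm R x y1 \<alpha>" "qcomm R x y2 \<alpha>"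
  shows "qcomm R x (y1 - y2) \<alpha>"
  using equiv_mod_diff[OF assms[unfolded qcomm_def]]
  by (simp add: qcomm_def algebra_simps smult_distribs)

lemma qcomm_smult_right: "qcomm R x y \<alpha> \<Longrightarrow> qcomm R x (smult c y) \<alpha>"
  unfolding qcomm_def by (drule equiv_mod_smult[of _ _ _ c]) (simp add: mult.commute)

lemma qcomm_pow_right: "qcomm R x y \<alpha> \<Longrightarrow> qcomm R x (y ^ n) (\<alpha> ^ n)"
  by (induct n) (simp_all add: qcomm_one_right qcomm_mult_right)

lemma qcomm_pow_left: "qcomm R x y \<alpha> \<Longrightarrow> qcomm R (x ^ n) y (\<alpha> ^ n)"
  by (induct n) (simp_all add: qcomm_one_left qcomm_mult_left)

lemma qcomm_inverse_right:
  assumes uv: "equiv_mod R (u * v) 1" and vu: "equiv_mod R (v * u) 1"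
    and x: "qcomm R x u \<alpha>" and "\<alpha> \<noteq> 0"
  shows "qcomm R x v (inverse \<alpha>)"
proof -
  have "x * v = 1 * (x * v)"
    by simp
  also have "equiv_mod R \<dots> (v * (u * x) * v)"
    using equiv_mod_rmult[OF equiv_mod_sym[OF vu], of "x * v"] by (simp add: mult.assoc)
  also have "equiv_mod R \<dots> (v * smult (inverse \<alpha>) (x * u) * v)"
    using qcomm_flip[OF x \<open>\<alpha> \<noteq> 0\<close>] unfolding qcomm_def
    by (intro equiv_mod_rmult equiv_mod_lmult)
  also have "\<dots> = smult (inverse \<alpha>) (v * x * (u * v))"
    by (simp add: mult.assoc)
  also have "equiv_mod R \<dots> (smult (inverse \<alpha>) (v * x * 1))"
    using uv by (intro equiv_mod_smult equiv_mod_lmult)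
  finally show ?thesis
    by (simp add: qcomm_def)
qed

section \<open>The relations of \<open>A(U_{q^{-1},q}(2))\<close>\<close>

definition xa :: free_alg where "xa = single [Ga] 1"
definition xb :: free_alg where "xb = single [Gb] 1"
definition xc :: free_alg where "xc = single [Gc] 1"
definition xd :: free_alg where "xd = single [Gd] 1"
definition xDi :: free_alg where "xDi = single [GDi] 1"

definition xD :: "complex \<Rightarrow> free_alg" where
  "xD q = xa * xd - smult (inverse q) (xb * xc)"

definition xz :: free_alg where
  "xz = xDi * xa * xd"

definition Dp :: "complex \<Rightarrow> int \<Rightarrow> free_alg" where
  "Dp q k = (if k \<ge> 0 then xD q ^ nat k else xDi ^ nat (- k))"

definition Xp :: "int \<Rightarrow> free_alg" where
  "Xp m = (if m > 0 then xa ^ nat m else if m < 0 then xd ^ nat (- m) else 1)"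

definition Yp :: "int \<Rightarrow> free_alg" where
  "Yp n = (if n > 0 then xc ^ nat n else if n < 0 then xb ^ nat (- n) else 1)"

definition Mon :: "complex \<Rightarrow> int \<times> nat \<times> int \<times> int \<Rightarrow> free_alg" where
  "Mon q = (\<lambda>(k, l, m, n). Dp q k * (xz ^ l * (Xp m * Yp n)))"

lemma Mon_eq: "Mon q (k, l, m, n) = Dp q k * (xz ^ l * (Xp m * Yp n))"
  by (simp add: Mon_def)

lemma alg_of_generators:
  "alg_of ga = xa" "alg_of gb = xb" "alg_of gc = xc" "alg_of gd = xd" "alg_of gDi = xDi"
  by (simp_all add: fa_gen_eq xa_def xb_def xc_def xd_def xDi_def)

lemmas alg_of_simps = alg_of_ops alg_of_generators

lemma alg_of_qD: "alg_of (qD q) = xD q"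
  by (simp add: qD_def alg_of_simps xD_def)

lemma alg_of_qz: "alg_of qz = xz"
  by (simp add: qz_def alg_of_simps xz_def)

lemma FA_monomials [simp]: "qD q \<in> FA" "qz \<in> FA" "Dpow q k \<in> FA" "Xpow m \<in> FA" "Ypow n \<in> FA"
  by (simp_all add: qD_def qz_def Dpow_def Xpow_def Ypow_def)

lemma alg_of_Dpow: "alg_of (Dpow q k) = Dp q k"
  by (simp add: Dpow_def Dp_def alg_of_simps alg_of_qD)

lemma FA_mono1: "mono1 q i \<in> FA"
  by (cases i) (simp add: mono1_def)

lemma alg_of_mono1: "alg_of (mono1 q i) = Mon q i"
  by (cases i) (simp add: mono1_def Mon_def alg_of_simps alg_of_Dpow alg_of_qz Xpow_def Xp_def
      Ypow_def Yp_def mult.assoc)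

locale uq2 =
  fixes q :: complex and R :: "free_alg set"
  assumes q_neq_0: "q \<noteq> 0"
    and rel_ab: "equiv_mod R (xa * xb) (smult (inverse q) (xb * xa))"
    and rel_cd: "equiv_mod R (xc * xd) (smult (inverse q) (xd * xc))"
    and rel_ac: "equiv_mod R (xa * xc) (smult q (xc * xa))"
    and rel_bd: "equiv_mod R (xb * xd) (smult q (xd * xb))"
    and rel_ad: "equiv_mod R (xa * xd) (xd * xa)"
    and rel_bc: "equiv_mod R (xb * xc) (smult (q ^ 2) (xc * xb))"
    and rel_D_Di: "equiv_mod R (xD q * xDi) 1"
    and rel_Di_D: "equiv_mod R (xDi * xD q) 1"
begin

abbreviation equiv (infix "\<approx>" 50) where "x \<approx> y \<equiv> equiv_mod R x y"

lemma qcomm_ab: "qcomm R xa xb (inverse q)" using rel_ab by (simp add: qcomm_def)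
lemma qcomm_cd: "qcomm R xc xd (inverse q)" using rel_cd by (simp add: qcomm_def)
lemma qcomm_ac: "qcomm R xa xc q" using rel_ac by (simp add: qcomm_def)
lemma qcomm_bd: "qcomm R xb xd q" using rel_bd by (simp add: qcomm_def)
lemma qcomm_ad: "qcomm R xa xd 1" using rel_ad by (simp add: qcomm_def)
lemma qcomm_bc: "qcomm R xb xc (q ^ 2)" using rel_bc by (simp add: qcomm_def)
lemma qcomm_ba: "qcomm R xb xa q" using qcomm_flip[OF qcomm_ab] q_neq_0 by simp
lemma qcomm_dc: "qcomm R xd xc q" using qcomm_flip[OF qcomm_cd] q_neq_0 by simp
lemma qcomm_ca: "qcomm R xc xa (inverse q)" using qcomm_flip[OF qcomm_ac] q_neq_0 by simp
lemma qcomm_db: "qcomm R xd xb (inverse q)" using qcomm_flip[OF qcomm_bd] q_neq_0 by simp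
lemma qcomm_da: "qcomm R xd xa 1" using qcomm_flip[OF qcomm_ad] by simp
lemma qcomm_cb: "qcomm R xc xb (inverse (q ^ 2))" using qcomm_flip[OF qcomm_bc] q_neq_0 by simp

lemma qcomm_D_if:
  assumes "qcomm R x xa \<alpha>1" "qcomm R x xd \<alpha>2" "qcomm R x xb \<beta>1" "qcomm R x xc \<beta>2"
    and "\<alpha>1 * \<alpha>2 = \<gamma>" "\<beta>1 * \<beta>2 = \<gamma>"
  shows "qcomm R x (xD q) \<gamma>"
  unfolding xD_def using assms
  by (metis qcomm_diff_right qcomm_mult_right qcomm_smult_right)

lemma qcomm_aD: "qcomm R xa (xD q) 1"
  by (rule qcomm_D_if[OF qcomm_refl qcomm_ad qcomm_ab qcomm_ac]) (use q_neq_0 in auto)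
lemma qcomm_dD: "qcomm R xd (xD q) 1"
  by (rule qcomm_D_if[OF qcomm_da qcomm_refl qcomm_db qcomm_dc]) (use q_neq_0 in auto)
lemma qcomm_bD: "qcomm R xb (xD q) (q ^ 2)"
  by (rule qcomm_D_if[OF qcomm_ba qcomm_bd qcomm_refl qcomm_bc]) (auto simp: power2_eq_square)
lemma qcomm_cD: "qcomm R xc (xD q) (inverse (q ^ 2))"
  by (rule qcomm_D_if[OF qcomm_ca qcomm_cd qcomm_cb qcomm_refl]) (auto simp: power2_eq_square)

lemma qcomm_Di_if: "qcomm R x (xD q) \<alpha> \<Longrightarrow> \<alpha> \<noteq> 0 \<Longrightarrow> qcomm R x xDi (inverse \<alpha>)"
  by (rule qcomm_inverse_right[OF rel_D_Di rel_Di_D])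

lemma qcomm_aDi: "qcomm R xa xDi 1" using qcomm_Di_if[OF qcomm_aD] by simp
lemma qcomm_dDi: "qcomm R xd xDi 1" using qcomm_Di_if[OF qcomm_dD] by simp
lemma qcomm_bDi: "qcomm R xb xDi (inverse (q ^ 2))" using qcomm_Di_if[OF qcomm_bD] q_neq_0 by simp
lemma qcomm_cDi: "qcomm R xc xDi (q ^ 2)" using qcomm_Di_if[OF qcomm_cD] q_neq_0 by simp
lemma qcomm_Da: "qcomm R (xD q) xa 1" using qcomm_flip[OF qcomm_aD] by simp
lemma qcomm_Dd: "qcomm R (xD q) xd 1" using qcomm_flip[OF qcomm_dD] by simp
lemma qcomm_DDi: "qcomm R (xD q) xDi 1"
  using rel_D_Di rel_Di_D by (auto simp: qcomm_def intro: equiv_mod_trans equiv_mod_sym)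

lemma qcomm_z_if:
  assumes "qcomm R x xDi \<alpha>1" "qcomm R x xa \<alpha>2" "qcomm R x xd \<alpha>3" "\<alpha>1 * \<alpha>2 * \<alpha>3 = 1"
  shows "qcomm R x xz 1"
  unfolding xz_def using qcomm_mult_right[OF qcomm_mult_right[OF assms(1,2)] assms(3)] assms(4) by simp

lemma qcomm_az: "qcomm R xa xz 1"
  by (rule qcomm_z_if[OF qcomm_aDi qcomm_refl qcomm_ad]) simp
lemma qcomm_dz: "qcomm R xd xz 1"
  by (rule qcomm_z_if[OF qcomm_dDi qcomm_da qcomm_refl]) simp
lemma qcomm_bz: "qcomm R xb xz 1"
  by (rule qcomm_z_if[OF qcomm_bDi qcomm_ba qcomm_bd]) (use q_neq_0 in \<open>simp add: power2_eq_square field_simps\<close>)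
lemma qcomm_cz: "qcomm R xc xz 1"
  by (rule qcomm_z_if[OF qcomm_cDi qcomm_ca qcomm_cd]) (use q_neq_0 in \<open>simp add: power2_eq_square field_simps\<close>)
lemma qcomm_za: "qcomm R xz xa 1" using qcomm_flip[OF qcomm_az] by simp
lemma qcomm_zd: "qcomm R xz xd 1" using qcomm_flip[OF qcomm_dz] by simp
lemma qcomm_zD: "qcomm R xz (xD q) 1"
  using qcomm_flip[OF qcomm_z_if[OF qcomm_DDi qcomm_Da qcomm_Dd]] by simp

lemma qcomm_Dp: "qcomm R x (xD q) \<alpha> \<Longrightarrow> \<alpha> \<noteq> 0 \<Longrightarrow> qcomm R x (Dp q k) (\<alpha> powi k)"
  using qcomm_pow_right[of R x "xD q" \<alpha> "nat k"] qcomm_pow_right[OF qcomm_Di_if, of x \<alpha> "nat (- k)"]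
  by (auto simp: Dp_def power_int_def)

lemma qcomm_Xp: "qcomm R x xa \<alpha> \<Longrightarrow> qcomm R x xd \<alpha> \<Longrightarrow> qcomm R x (Xp m) (\<alpha> ^ nat \<bar>m\<bar>)"
  using qcomm_pow_right[of R x xa \<alpha> "nat m"] qcomm_pow_right[of R x xd \<alpha> "nat (- m)"]
  by (auto simp: Xp_def qcomm_one_right)

lemma qcomm_Xp_left: "qcomm R xa y \<alpha> \<Longrightarrow> qcomm R xd y \<alpha> \<Longrightarrow> qcomm R (Xp m) y (\<alpha> ^ nat \<bar>m\<bar>)"
  using qcomm_pow_left[of R xa y \<alpha> "nat m"] qcomm_pow_left[of R xd y \<alpha> "nat (- m)"]
  by (auto simp: Xp_def qcomm_one_left)

lemma Dp_mult_D: "Dp q k * xD q \<approx> Dp q (k + 1)"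
proof (cases "k \<ge> 0")
  case True
  then show ?thesis
    by (simp add: Dp_def nat_add_distrib power_Suc2[symmetric])
next
  case False
  then obtain j where j: "nat (- k) = Suc j"
    by (cases "nat (- k)") auto
  then have "nat (- (k + 1)) = j"
    by arith
  note j = j this
  have "Dp q k * xD q = xDi ^ j * (xDi * xD q)"
    using False j by (simp add: Dp_def power_Suc2 mult.assoc del: power_Suc)
  also have "\<dots> \<approx> xDi ^ j * 1"
    by (intro equiv_mod_lmult rel_Di_D)
  also have "xDi ^ j * 1 = Dp q (k + 1)"
    using False j by (auto simp: Dp_def)
  finally show ?thesis .
qed

lemma Di_mult_Dp: "xDi * Dp q k \<approx> Dp q (k - 1)"
proof (cases "k > 0")
  case False
  then have "nat (- (k - 1)) = Suc (nat (- k))"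
    by arith
  with False show ?thesis
    by (simp add: Dp_def)
next
  case True
  then obtain j where j: "nat k = Suc j"
    by (cases "nat k") auto
  then have "nat (k - 1) = j"
    by arith
  note j = j this
  have "xDi * Dp q k = (xDi * xD q) * xD q ^ j"
    using True j by (simp add: Dp_def mult.assoc)
  also have "\<dots> \<approx> 1 * xD q ^ j"
    by (intro equiv_mod_rmult rel_Di_D)
  also have "1 * xD q ^ j = Dp q (k - 1)"
    using True j by (auto simp: Dp_def)
  finally show ?thesis .
qed

lemma ad_equiv: "xa * xd \<approx> xD q * xz"
proof -
  have "xD q * xz = (xD q * xDi) * (xa * xd)"
    by (simp add: xz_def mult.assoc)
  also have "\<dots> \<approx> 1 * (xa * xd)"
    by (intro equiv_mod_rmult rel_D_Di)
  finally show ?thesis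
    by (simp add: equiv_mod_sym)
qed

lemma da_equiv: "xd * xa \<approx> xD q * xz"
  using equiv_mod_trans[OF equiv_mod_sym[OF rel_ad] ad_equiv] .

lemma bc_equiv: "xb * xc \<approx> smult q (xD q * xz - xD q)"
proof -
  have "xb * xc = smult q (xa * xd - xD q)"
    using q_neq_0 by (simp add: xD_def smult_distribs)
  also have "\<dots> \<approx> smult q (xD q * xz - xD q)"
    by (intro equiv_mod_smult equiv_mod_diff ad_equiv equiv_mod_refl)
  finally show ?thesis .
qed

lemma cb_equiv: "xc * xb \<approx> smult (inverse q) (xD q * xz - xD q)"
proof -
  have "xc * xb \<approx> smult (inverse (q ^ 2)) (xb * xc)"
    using qcomm_cb by (simp add: qcomm_def)
  also have "\<dots> \<approx> smult (inverse (q ^ 2)) (smult q (xD q * xz - xD q))"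
    by (intro equiv_mod_smult bc_equiv)
  also have "\<dots> = smult (inverse q) (xD q * xz - xD q)"
    using q_neq_0 by (simp add: power2_eq_square field_simps)
  finally show ?thesis .
qed

lemma qcomm_mult_Mon:
  assumes "qcomm R x (Dp q k) \<alpha>" "qcomm R x xz 1"
  shows "x * Mon q (k, l, m, n) \<approx> smult \<alpha> (Dp q k * (xz ^ l * (x * (Xp m * Yp n))))"
proof -
  have "x * Mon q (k, l, m, n) \<approx> smult \<alpha> (Dp q k * (x * (xz ^ l * (Xp m * Yp n))))"
    unfolding Mon_eq by (rule qcomm_push[OF assms(1)])
  also have "\<dots> \<approx> smult \<alpha> (Dp q k * smult 1 (xz ^ l * (x * (Xp m * Yp n))))"
    using qcomm_pow_right[OF assms(2), of l] by (intro equiv_mod_smult equiv_mod_lmult qcomm_push) simp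
  finally show ?thesis
    by simp
qed

lemma D_absorb: "Dp q k * (xz ^ l * (xD q * (xz ^ e * w))) \<approx> Dp q (k + 1) * (xz ^ (l + e) * w)"
proof -
  have "Dp q k * (xz ^ l * (xD q * (xz ^ e * w))) \<approx> Dp q k * smult 1 (xD q * (xz ^ l * (xz ^ e * w)))"
    using qcomm_pow_left[OF qcomm_zD, of l] by (intro equiv_mod_lmult qcomm_push) simp
  also have "\<dots> = (Dp q k * xD q) * (xz ^ (l + e) * w)"
    by (simp add: mult.assoc power_add)
  also have "\<dots> \<approx> Dp q (k + 1) * (xz ^ (l + e) * w)"
    by (intro equiv_mod_rmult Dp_mult_D)
  finally show ?thesis .
qed

lemma Mon_absorb: "Dp q k * (xz ^ l * (Xp m * (xD q * (xz ^ e * Yp n)))) \<approx> Mon q (k + 1, l + e, m, n)"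
proof -
  have D: "qcomm R (Xp m) (xD q) 1" and z: "qcomm R (Xp m) (xz ^ e) 1"
    using qcomm_Xp_left[OF qcomm_aD qcomm_dD, of m]
      qcomm_Xp_left[OF qcomm_pow_right[OF qcomm_az, of e] qcomm_pow_right[OF qcomm_dz, of e], of m]
    by simp_all
  have "Xp m * (xD q * (xz ^ e * Yp n)) \<approx> smult 1 (xD q * (Xp m * (xz ^ e * Yp n)))"
    by (rule qcomm_push[OF D])
  also have "\<dots> \<approx> smult 1 (xD q * smult 1 (xz ^ e * (Xp m * Yp n)))"
    by (intro equiv_mod_smult equiv_mod_lmult qcomm_push[OF z])
  finally have "Xp m * (xD q * (xz ^ e * Yp n)) \<approx> xD q * (xz ^ e * (Xp m * Yp n))"
    by simp
  then have "Dp q k * (xz ^ l * (Xp m * (xD q * (xz ^ e * Yp n)))) \<approx>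
      Dp q k * (xz ^ l * (xD q * (xz ^ e * (Xp m * Yp n))))"
    by (intro equiv_mod_lmult)
  also have "\<dots> \<approx> Mon q (k + 1, l + e, m, n)"
    unfolding Mon_eq by (rule D_absorb)
  finally show ?thesis .
qed

lemma Xp_Yp_step:
  "m \<ge> 0 \<Longrightarrow> xa * Xp m = Xp (m + 1)" "m \<le> 0 \<Longrightarrow> xd * Xp m = Xp (m - 1)"
  "n \<ge> 0 \<Longrightarrow> xc * Yp n = Yp (n + 1)" "n \<le> 0 \<Longrightarrow> xb * Yp n = Yp (n - 1)"
proof -
  have "m \<ge> 0 \<Longrightarrow> nat (m + 1) = Suc (nat m)" "m \<le> 0 \<Longrightarrow> nat (- (m - 1)) = Suc (nat (- m))"
    "n \<ge> 0 \<Longrightarrow> nat (n + 1) = Suc (nat n)" "n \<le> 0 \<Longrightarrow> nat (- (n - 1)) = Suc (nat (- n))"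
    by arith+
  then show "m \<ge> 0 \<Longrightarrow> xa * Xp m = Xp (m + 1)" "m \<le> 0 \<Longrightarrow> xd * Xp m = Xp (m - 1)"
    "n \<ge> 0 \<Longrightarrow> xc * Yp n = Yp (n + 1)" "n \<le> 0 \<Longrightarrow> xb * Yp n = Yp (n - 1)"
    by (auto simp: Xp_def Yp_def)
qed

text \<open>Moving the exponent of \<open>Xp\<close> or \<open>Yp\<close> towards zero costs one factor \<open>ad = Dz\<close>
  or \<open>bc = q (Dz - D)\<close>.\<close>

lemma Xp_Yp_step_back:
  "m < 0 \<Longrightarrow> xa * Xp m \<approx> xD q * (xz * Xp (m + 1))"
  "m > 0 \<Longrightarrow> xd * Xp m \<approx> xD q * (xz * Xp (m - 1))"
  "n < 0 \<Longrightarrow> xc * Yp n \<approx> smult (inverse q) (xD q * (xz * Yp (n + 1)) - xD q * Yp (n + 1))"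
  "n > 0 \<Longrightarrow> xb * Yp n \<approx> smult q (xD q * (xz * Yp (n - 1)) - xD q * Yp (n - 1))"
proof -
  assume "m < 0"
  then have "Xp m = xd * Xp (m + 1)"
    using Xp_Yp_step(2)[of "m + 1"] by simp
  then have "xa * Xp m = (xa * xd) * Xp (m + 1)"
    by (simp add: mult.assoc)
  also have "\<dots> \<approx> (xD q * xz) * Xp (m + 1)"
    by (intro equiv_mod_rmult ad_equiv)
  finally show "xa * Xp m \<approx> xD q * (xz * Xp (m + 1))"
    by (simp add: mult.assoc)
next
  assume "m > 0"
  then have "Xp m = xa * Xp (m - 1)"
    using Xp_Yp_step(1)[of "m - 1"] by simp
  then have "xd * Xp m = (xd * xa) * Xp (m - 1)"
    by (simp add: mult.assoc)
  also have "\<dots> \<approx> (xD q * xz) * Xp (m - 1)"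
    by (intro equiv_mod_rmult da_equiv)
  finally show "xd * Xp m \<approx> xD q * (xz * Xp (m - 1))"
    by (simp add: mult.assoc)
next
  assume "n < 0"
  then have "Yp n = xb * Yp (n + 1)"
    using Xp_Yp_step(4)[of "n + 1"] by simp
  then have "xc * Yp n = (xc * xb) * Yp (n + 1)"
    by (simp add: mult.assoc)
  also have "\<dots> \<approx> smult (inverse q) (xD q * xz - xD q) * Yp (n + 1)"
    by (intro equiv_mod_rmult cb_equiv)
  finally show "xc * Yp n \<approx> smult (inverse q) (xD q * (xz * Yp (n + 1)) - xD q * Yp (n + 1))"
    by (simp add: algebra_simps)
next
  assume "n > 0"
  then have "Yp n = xc * Yp (n - 1)"
    using Xp_Yp_step(3)[of "n - 1"] by simp
  then have "xb * Yp n = (xb * xc) * Yp (n - 1)"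
    by (simp add: mult.assoc)
  also have "\<dots> \<approx> smult q (xD q * xz - xD q) * Yp (n - 1)"
    by (intro equiv_mod_rmult bc_equiv)
  finally show "xb * Yp n \<approx> smult q (xD q * (xz * Yp (n - 1)) - xD q * Yp (n - 1))"
    by (simp add: algebra_simps)
qed

lemma span_Mon_if_equiv: "x \<approx> Mon q j \<Longrightarrow> span_mod R UNIV (Mon q) x"
  by (erule span_mod_equiv, rule span_mod_base) simp

lemma Di_mult_Mon_in_span: "span_mod R UNIV (Mon q) (xDi * Mon q i)"
proof -
  obtain k l m n where i: "i = (k, l, m, n)"
    by (cases i)
  have "xDi * Mon q i = (xDi * Dp q k) * (xz ^ l * (Xp m * Yp n))"
    by (simp add: i Mon_eq mult.assoc)
  also have "\<dots> \<approx> Mon q (k - 1, l, m, n)"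
    unfolding Mon_eq by (intro equiv_mod_rmult Di_mult_Dp)
  finally show ?thesis
    by (rule span_Mon_if_equiv)
qed

lemma a_mult_Mon_in_span: "span_mod R UNIV (Mon q) (xa * Mon q i)"
proof -
  obtain k l m n where i: "i = (k, l, m, n)"
    by (cases i)
  have a: "xa * Mon q i \<approx> Dp q k * (xz ^ l * (xa * Xp m * Yp n))"
    using qcomm_mult_Mon[OF qcomm_Dp[OF qcomm_aD one_neq_zero] qcomm_az, of k l m n]
    by (simp add: i mult.assoc)
  show ?thesis
  proof (cases "m \<ge> 0")
    case True
    with a show ?thesis
      by (intro span_Mon_if_equiv[of _ "(k, l, m + 1, n)"]) (simp add: Mon_eq Xp_Yp_step(1))
  next
    case False
    have "Dp q k * (xz ^ l * (xa * Xp m * Yp n)) \<approx> Dp q k * (xz ^ l * (xD q * (xz * Xp (m + 1)) * Yp n))"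
      using False by (intro equiv_mod_lmult equiv_mod_rmult Xp_Yp_step_back(1)) simp
    also have "\<dots> = Dp q k * (xz ^ l * (xD q * (xz ^ 1 * (Xp (m + 1) * Yp n))))"
      by (simp add: mult.assoc)
    also have "\<dots> \<approx> Mon q (k + 1, l + 1, m + 1, n)"
      unfolding Mon_eq by (rule D_absorb)
    finally show ?thesis
      using a by (intro span_Mon_if_equiv) (rule equiv_mod_trans)
  qed
qed

lemma d_mult_Mon_in_span: "span_mod R UNIV (Mon q) (xd * Mon q i)"
proof -
  obtain k l m n where i: "i = (k, l, m, n)"
    by (cases i)
  have d: "xd * Mon q i \<approx> Dp q k * (xz ^ l * (xd * Xp m * Yp n))"
    using qcomm_mult_Mon[OF qcomm_Dp[OF qcomm_dD one_neq_zero] qcomm_dz, of k l m n]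
    by (simp add: i mult.assoc)
  show ?thesis
  proof (cases "m \<le> 0")
    case True
    with d show ?thesis
      by (intro span_Mon_if_equiv[of _ "(k, l, m - 1, n)"]) (simp add: Mon_eq Xp_Yp_step(2))
  next
    case False
    have "Dp q k * (xz ^ l * (xd * Xp m * Yp n)) \<approx> Dp q k * (xz ^ l * (xD q * (xz * Xp (m - 1)) * Yp n))"
      using False by (intro equiv_mod_lmult equiv_mod_rmult Xp_Yp_step_back(2)) simp
    also have "\<dots> = Dp q k * (xz ^ l * (xD q * (xz ^ 1 * (Xp (m - 1) * Yp n))))"
      by (simp add: mult.assoc)
    also have "\<dots> \<approx> Mon q (k + 1, l + 1, m - 1, n)"
      unfolding Mon_eq by (rule D_absorb)
    finally show ?thesis
      using d by (intro span_Mon_if_equiv) (rule equiv_mod_trans)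
  qed
qed

lemma c_mult_Mon_in_span: "span_mod R UNIV (Mon q) (xc * Mon q i)"
proof -
  obtain k l m n where i: "i = (k, l, m, n)"
    by (cases i)
  define \<alpha> where "\<alpha> = inverse (q ^ 2) powi k * inverse q ^ nat \<bar>m\<bar>"
  have "qcomm R xc (Dp q k) (inverse (q ^ 2) powi k)"
    by (rule qcomm_Dp[OF qcomm_cD]) (use q_neq_0 in simp)
  from qcomm_mult_Mon[OF this qcomm_cz, of l m n]
  have "xc * Mon q i \<approx> smult (inverse (q ^ 2) powi k) (Dp q k * (xz ^ l * (xc * (Xp m * Yp n))))"
    by (simp add: i)
  also have "\<dots> \<approx> smult (inverse (q ^ 2) powi k) (Dp q k * (xz ^ l * smult (inverse q ^ nat \<bar>m\<bar>) (Xp m * (xc * Yp n))))"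
    by (intro equiv_mod_smult equiv_mod_lmult qcomm_push qcomm_Xp qcomm_ca qcomm_cd)
  also have "\<dots> = smult \<alpha> (Dp q k * (xz ^ l * (Xp m * (xc * Yp n))))"
    by (simp add: \<alpha>_def)
  finally have c: "xc * Mon q i \<approx> smult \<alpha> (Dp q k * (xz ^ l * (Xp m * (xc * Yp n))))" .
  show ?thesis
  proof (cases "n \<ge> 0")
    case True
    with c show ?thesis
      by (intro span_mod_equiv[OF _ span_mod_smult[OF span_mod_base[of "(k, l, m, n + 1)"]]])
        (simp_all add: Mon_eq Xp_Yp_step(3))
  next
    case False
    let ?Y = "Yp (n + 1)"
    note c
    also have "smult \<alpha> (Dp q k * (xz ^ l * (Xp m * (xc * Yp n)))) \<approx>
        smult \<alpha> (Dp q k * (xz ^ l * (Xp m * smult (inverse q) (xD q * (xz * ?Y) - xD q * ?Y))))"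
      using False by (intro equiv_mod_smult equiv_mod_lmult Xp_Yp_step_back(3)) simp
    also have "\<dots> = smult (\<alpha> * inverse q) (Dp q k * (xz ^ l * (Xp m * (xD q * (xz ^ 1 * ?Y)))) -
        Dp q k * (xz ^ l * (Xp m * (xD q * (xz ^ 0 * ?Y)))))"
      by (simp add: right_diff_distrib smult_distribs)
    finally show ?thesis
      by (rule span_mod_equiv)
        (intro span_mod_smult span_mod_diff span_mod_equiv[OF Mon_absorb] span_mod_base UNIV_I)
  qed
qed

lemma b_mult_Mon_in_span: "span_mod R UNIV (Mon q) (xb * Mon q i)"
proof -
  obtain k l m n where i: "i = (k, l, m, n)"
    by (cases i)
  define \<alpha> where "\<alpha> = (q ^ 2) powi k * q ^ nat \<bar>m\<bar>"
  have "qcomm R xb (Dp q k) ((q ^ 2) powi k)"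
    by (rule qcomm_Dp[OF qcomm_bD]) (use q_neq_0 in simp)
  from qcomm_mult_Mon[OF this qcomm_bz, of l m n]
  have "xb * Mon q i \<approx> smult ((q ^ 2) powi k) (Dp q k * (xz ^ l * (xb * (Xp m * Yp n))))"
    by (simp add: i)
  also have "\<dots> \<approx> smult ((q ^ 2) powi k) (Dp q k * (xz ^ l * smult (q ^ nat \<bar>m\<bar>) (Xp m * (xb * Yp n))))"
    by (intro equiv_mod_smult equiv_mod_lmult qcomm_push qcomm_Xp qcomm_ba qcomm_bd)
  also have "\<dots> = smult \<alpha> (Dp q k * (xz ^ l * (Xp m * (xb * Yp n))))"
    by (simp add: \<alpha>_def)
  finally have b: "xb * Mon q i \<approx> smult \<alpha> (Dp q k * (xz ^ l * (Xp m * (xb * Yp n))))" .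
  show ?thesis
  proof (cases "n \<le> 0")
    case True
    with b show ?thesis
      by (intro span_mod_equiv[OF _ span_mod_smult[OF span_mod_base[of "(k, l, m, n - 1)"]]])
        (simp_all add: Mon_eq Xp_Yp_step(4))
  next
    case False
    let ?Y = "Yp (n - 1)"
    note b
    also have "smult \<alpha> (Dp q k * (xz ^ l * (Xp m * (xb * Yp n)))) \<approx>
        smult \<alpha> (Dp q k * (xz ^ l * (Xp m * smult q (xD q * (xz * ?Y) - xD q * ?Y))))"
      using False by (intro equiv_mod_smult equiv_mod_lmult Xp_Yp_step_back(4)) simp
    also have "\<dots> = smult (\<alpha> * q) (Dp q k * (xz ^ l * (Xp m * (xD q * (xz ^ 1 * ?Y)))) -
        Dp q k * (xz ^ l * (Xp m * (xD q * (xz ^ 0 * ?Y)))))"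
      by (simp add: right_diff_distrib smult_distribs)
    finally show ?thesis
      by (rule span_mod_equiv)
        (intro span_mod_smult span_mod_diff span_mod_equiv[OF Mon_absorb] span_mod_base UNIV_I)
  qed
qed

lemma span_Mon: "span_mod R UNIV (Mon q) p"
proof (rule span_mod_all)
  show "span_mod R UNIV (Mon q) 1"
    using span_mod_base[of "(0, 0, 0, 0)" UNIV R "Mon q"] by (simp add: Mon_eq Dp_def Xp_def Yp_def)
  show "span_mod R UNIV (Mon q) (single [g] 1 * Mon q i)" for g i
    by (cases g) (simp_all flip: xa_def xb_def xc_def xd_def xDi_def add: a_mult_Mon_in_span
        b_mult_Mon_in_span c_mult_Mon_in_span d_mult_Mon_in_span Di_mult_Mon_in_span)
qed

end

lemma alg_of_Urels:
  "alg_of ` Urels q = {xa * xb - smult (inverse q) (xb * xa), xc * xd - smult (inverse q) (xd * xc),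
     xa * xc - smult q (xc * xa), xb * xd - smult q (xd * xb), xa * xd - xd * xa,
     xb * xc - smult (q ^ 2) (xc * xb), xD q * xDi - 1, xDi * xD q - 1}"
  by (simp add: Urels_def alg_of_simps alg_of_qD)

lemma uq2_if_Urels_subset:
  assumes "q \<noteq> 0" "Urels q \<subseteq> X"
  shows "uq2 q (alg_of ` X)"
proof -
  have rel: "equiv_mod (alg_of ` X) x y" if "x - y \<in> alg_of ` Urels q" for x y
    using that assms(2) unfolding equiv_mod_def by (auto intro: ideal_gen.base)
  show ?thesis
    by unfold_locales (fact assms(1), (rule rel, simp add: alg_of_Urels)+)
qed

section \<open>Linear independence of the monomials of \<open>A(U_{q^{-1},q}(2))\<close>\<close>

type_synonym idx1 = "int \<times> nat \<times> int \<times> int"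

text \<open>An opaque copy of \<open>powi\<close>: the coefficient identities below are proved by splitting
  exponents with \<open>qpow_simps\<close>; with \<open>powi\<close> and its library rules the simplifier does not
  terminate on them.\<close>

definition qpow :: "complex \<Rightarrow> int \<Rightarrow> complex" where
  "qpow q e = q powi e"

lemma qpow_simps:
  assumes "q \<noteq> 0"
  shows "qpow q (a + b) = qpow q a * qpow q b" "qpow q (a - b) = qpow q a / qpow q b"
    "qpow q (- a) = inverse (qpow q a)" "qpow q (2 * a) = qpow q a * qpow q a"
    "qpow q (a * 2) = qpow q a * qpow q a" "qpow q (numeral n) = q ^ numeral n"
    "qpow q 1 = q" "qpow q 0 = 1" "qpow q (- 1) = inverse q" "qpow q a \<noteq> 0"
  using assms
  by (simp_all add: qpow_def power_int_add power_int_diff power_int_minus power_int_mult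
      mult.commute[of 2] power2_eq_square)

text \<open>Left multiplication by the generators on the span of the monomials \<open>Mon q (k, l, m, n)\<close>,
  written on coefficient vectors; the coefficients are read off from the reductions above.\<close>

definition act_a :: "idx1 vec \<Rightarrow> idx1 vec" where
  "act_a y = (\<lambda>(k, l, m, n). if m > 0 then y (k, l, m - 1, n)
     else if l > 0 then y (k - 1, l - 1, m - 1, n) else 0)"

definition act_d :: "idx1 vec \<Rightarrow> idx1 vec" where
  "act_d y = (\<lambda>(k, l, m, n). if m < 0 then y (k, l, m + 1, n)
     else if l > 0 then y (k - 1, l - 1, m + 1, n) else 0)"

definition act_Di :: "idx1 vec \<Rightarrow> idx1 vec" where
  "act_Di y = (\<lambda>(k, l, m, n). y (k + 1, l, m, n))"

definition act_c :: "complex \<Rightarrow> idx1 vec \<Rightarrow> idx1 vec" where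
  "act_c q y = (\<lambda>(k, l, m, n). if n > 0 then qpow q (- 2 * k - \<bar>m\<bar>) * y (k, l, m, n - 1)
     else qpow q (1 - 2 * k - \<bar>m\<bar>) *
       ((if l > 0 then y (k - 1, l - 1, m, n - 1) else 0) - y (k - 1, l, m, n - 1)))"

definition act_b :: "complex \<Rightarrow> idx1 vec \<Rightarrow> idx1 vec" where
  "act_b q y = (\<lambda>(k, l, m, n). if n < 0 then qpow q (2 * k + \<bar>m\<bar>) * y (k, l, m, n + 1)
     else qpow q (2 * k + \<bar>m\<bar> - 1) *
       ((if l > 0 then y (k - 1, l - 1, m, n + 1) else 0) - y (k - 1, l, m, n + 1)))"

lemmas act_defs = act_a_def act_b_def act_c_def act_d_def act_Di_def


definition shift_D :: "idx1 vec \<Rightarrow> idx1 vec" where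
  "shift_D y = (\<lambda>(k, l, m, n). y (k - 1, l, m, n))"

definition shift_z :: "idx1 vec \<Rightarrow> idx1 vec" where
  "shift_z y = (\<lambda>(k, l, m, n). if l > 0 then y (k, l - 1, m, n) else 0)"

lemma act_relations:
  assumes q: "q \<noteq> 0"
  shows "act_a (act_b q y) = (\<lambda>x. inverse q * act_b q (act_a y) x)"
    and "act_c q (act_d y) = (\<lambda>x. inverse q * act_d (act_c q y) x)"
    and "act_a (act_c q y) = (\<lambda>x. q * act_c q (act_a y) x)"
    and "act_b q (act_d y) = (\<lambda>x. q * act_d (act_b q y) x)"
    and "act_a (act_d y) = act_d (act_a y)"
    and "act_b q (act_c q y) = (\<lambda>x. q ^ 2 * act_c q (act_b q y) x)"
    and "(\<lambda>x. act_a (act_d y) x - inverse q * act_b q (act_c q y) x) = shift_D y"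
    and "act_Di (act_a (act_d y)) = shift_z y"
  using q by (auto simp: fun_eq_iff act_defs shift_D_def shift_z_def qpow_simps[OF q] field_simps
      power2_eq_square split: abs_split)

definition ops1 :: "complex \<Rightarrow> gen \<Rightarrow> idx1 vec \<Rightarrow> idx1 vec" where
  "ops1 q g = (case g of Ga \<Rightarrow> act_a | Gb \<Rightarrow> act_b q | Gc \<Rightarrow> act_c q | Gd \<Rightarrow> act_d | GDi \<Rightarrow> act_Di)"

lemma linop_ops1: "linop (ops1 q g)"
  by (cases g) (auto simp: ops1_def linop_def act_defs fun_eq_iff algebra_simps)

lemma rep_ops1_generators:
  "rep (ops1 q) xa = act_a" "rep (ops1 q) xb = act_b q" "rep (ops1 q) xc = act_c q"
  "rep (ops1 q) xd = act_d" "rep (ops1 q) xDi = act_Di"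
  by (simp_all add: fun_eq_iff rep_gen ops1_def xa_def xb_def xc_def xd_def xDi_def)

lemmas rep_ops1_simps = rep_ops1_generators rep_mult[OF linop_ops1] rep_diff rep_smult rep_one

lemma rep_ops1_D: "q \<noteq> 0 \<Longrightarrow> rep (ops1 q) (xD q) = shift_D"
  by (simp add: fun_eq_iff xD_def rep_ops1_simps act_relations(7)[symmetric])

lemma rep_ops1_z: "q \<noteq> 0 \<Longrightarrow> rep (ops1 q) xz = shift_z"
  by (simp add: fun_eq_iff xz_def rep_ops1_simps act_relations(8)[symmetric])

lemma shift_D_act_Di: "shift_D (act_Di y) = y" "act_Di (shift_D y) = y"
  by (auto simp: fun_eq_iff shift_D_def act_Di_def)

lemma rep_ops1_vanishes_on_Urels:
  assumes q: "q \<noteq> 0" and r: "r \<in> alg_of ` Urels q"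
  shows "rep (ops1 q) r y = (\<lambda>x. 0)"
  using r unfolding alg_of_Urels
  by (elim insertE emptyE)
    (simp_all add: rep_ops1_simps rep_ops1_D[OF q] act_relations[OF q] shift_D_act_Di)

lemma act_unit_vec:
  "m \<ge> 0 \<Longrightarrow> act_a (unit_vec (0, 0, m, n)) = unit_vec (0, 0, m + 1, n)"
  "m \<le> 0 \<Longrightarrow> act_d (unit_vec (0, 0, m, n)) = unit_vec (0, 0, m - 1, n)"
  "n \<ge> 0 \<Longrightarrow> act_c q (unit_vec (0, 0, 0, n)) = unit_vec (0, 0, 0, n + 1)"
  "n \<le> 0 \<Longrightarrow> act_b q (unit_vec (0, 0, 0, n)) = unit_vec (0, 0, 0, n - 1)"
  "act_Di (unit_vec (k, l, m, n)) = unit_vec (k - 1, l, m, n)"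
  "shift_D (unit_vec (k, l, m, n)) = unit_vec (k + 1, l, m, n)"
  "shift_z (unit_vec (k, l, m, n)) = unit_vec (k, Suc l, m, n)"
  by (auto simp: fun_eq_iff unit_vec_def act_defs shift_D_def shift_z_def qpow_def)

lemma act_funpow_unit_vec:
  "(act_a ^^ j) (unit_vec (0, 0, 0, n)) = unit_vec (0, 0, int j, n)"
  "(act_d ^^ j) (unit_vec (0, 0, 0, n)) = unit_vec (0, 0, - int j, n)"
  "(act_c q ^^ j) (unit_vec (0, 0, 0, 0)) = unit_vec (0, 0, 0, int j)"
  "(act_b q ^^ j) (unit_vec (0, 0, 0, 0)) = unit_vec (0, 0, 0, - int j)"
  "(act_Di ^^ j) (unit_vec (k, l, m, n)) = unit_vec (k - int j, l, m, n)"
  "(shift_D ^^ j) (unit_vec (k, l, m, n)) = unit_vec (k + int j, l, m, n)"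
  "(shift_z ^^ j) (unit_vec (0, 0, m, n)) = unit_vec (0, j, m, n)"
  by (induct j) (auto simp: act_unit_vec intro!: arg_cong[where f = unit_vec])

lemma rep_ops1_Mon:
  assumes "q \<noteq> 0"
  shows "rep (ops1 q) (Mon q i) (unit_vec (0, 0, 0, 0)) = unit_vec i"
proof -
  obtain k l m n where i: "i = (k, l, m, n)"
    by (cases i)
  have "rep (ops1 q) (Yp n) (unit_vec (0, 0, 0, 0)) = unit_vec (0, 0, 0, n)"
    by (auto simp: Yp_def rep_pow[OF linop_ops1] rep_ops1_generators act_funpow_unit_vec rep_one)
  moreover have "rep (ops1 q) (Xp m) (unit_vec (0, 0, 0, n)) = unit_vec (0, 0, m, n)"
    by (auto simp: Xp_def rep_pow[OF linop_ops1] rep_ops1_generators act_funpow_unit_vec rep_one)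
  moreover have "rep (ops1 q) (xz ^ l) (unit_vec (0, 0, m, n)) = unit_vec (0, l, m, n)"
    by (simp add: rep_pow[OF linop_ops1] rep_ops1_z[OF assms] act_funpow_unit_vec)
  moreover have "rep (ops1 q) (Dp q k) (unit_vec (0, l, m, n)) = unit_vec (k, l, m, n)"
    by (auto simp: Dp_def rep_pow[OF linop_ops1] rep_ops1_D[OF assms] rep_ops1_generators
        act_funpow_unit_vec)
  ultimately show ?thesis
    by (simp add: i Mon_eq rep_mult[OF linop_ops1])
qed

lemma basis_mono1:
  assumes "q \<noteq> 0"
  shows "basis_mod (fa_ideal (Urels q)) UNIV (mono1 q)"
proof (rule basis_modI[where ops = "ops1 q" and v = "unit_vec (0, 0, 0, 0)" and pos = id])
  interpret uq2 q "alg_of ` Urels q"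
    using uq2_if_Urels_subset[OF assms] by simp
  show "span_mod (alg_of ` Urels q) UNIV (\<lambda>i. alg_of (mono1 q i)) p" for p
    using span_Mon by (simp add: alg_of_mono1)
  show "\<exists>s. s \<noteq> 0 \<and> rep (ops1 q) (alg_of (mono1 q i)) (unit_vec (0, 0, 0, 0)) = (\<lambda>x. s * unit_vec (id i) x)"
    for i
    using rep_ops1_Mon[OF assms] by (intro exI[of _ 1]) (simp add: alg_of_mono1)
qed (auto simp: Urels_def FA_mono1 linop_ops1 rep_ops1_vanishes_on_Urels[OF assms])

section \<open>The quotient \<open>A(DT^2_q)\<close>: spanning\<close>

definition DTmon :: "complex \<Rightarrow> idx2 \<Rightarrow> free_alg" where
  "DTmon q i = (case i of
      IA m n \<Rightarrow> Dp q m * xa ^ n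
    | ID m n \<Rightarrow> Dp q m * xd ^ n
    | IZ m \<Rightarrow> Dp q m * xz
    | IB m n \<Rightarrow> Dp q m * xb ^ n
    | IC m n \<Rightarrow> Dp q m * xc ^ n
    | IZc m \<Rightarrow> Dp q m * (1 - xz))"

lemma FA_mono2: "mono2 q i \<in> FA"
  by (cases i) (simp_all add: mono2_def)

lemma alg_of_mono2: "alg_of (mono2 q i) = DTmon q i"
  by (cases i) (simp_all add: mono2_def DTmon_def alg_of_simps alg_of_Dpow alg_of_qz)

lemma equiv_mod_pow_mult_0:
  assumes "equiv_mod R (x * y) 0"
  shows "equiv_mod R (x ^ Suc i * y ^ Suc j) 0"
proof -
  have "x ^ Suc i * y ^ Suc j = x ^ i * (x * y) * y ^ j"
    by (simp only: power_Suc2[of x] power_Suc[of y] mult.assoc)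
  also have "equiv_mod R \<dots> (x ^ i * 0 * y ^ j)"
    using assms by (intro equiv_mod_mult equiv_mod_refl)
  finally show ?thesis
    by simp
qed

lemma equiv_mod_absorb_pow:
  assumes "qcomm R z x 1" "equiv_mod R (x * z) x"
  shows "equiv_mod R (z * x ^ Suc i) (x ^ Suc i)"
proof -
  have "equiv_mod R (z * x ^ Suc i) (smult 1 (x ^ Suc i * z))"
    using qcomm_pow_right[OF assms(1), of "Suc i"] by (simp add: qcomm_def del: power_Suc)
  also have "smult 1 (x ^ Suc i * z) = x ^ i * (x * z)"
    by (simp add: power_Suc2 mult.assoc del: power_Suc)
  also have "equiv_mod R \<dots> (x ^ i * x)"
    by (intro equiv_mod_lmult assms(2))
  finally show ?thesis
    by (simp add: power_Suc2 del: power_Suc)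
qed

locale dtq = uq2 +
  assumes rel_ab_0: "equiv_mod R (xa * xb) 0"
    and rel_ac_0: "equiv_mod R (xa * xc) 0"
    and rel_cd_0: "equiv_mod R (xc * xd) 0"
    and rel_bd_0: "equiv_mod R (xb * xd) 0"
begin

lemma rel_dc_0: "xd * xc \<approx> 0"
proof -
  have "xd * xc \<approx> smult q (xc * xd)"
    using qcomm_dc by (simp add: qcomm_def)
  also have "\<dots> \<approx> smult q 0"
    by (intro equiv_mod_smult rel_cd_0)
  finally show ?thesis
    by simp
qed

lemma rel_db_0: "xd * xb \<approx> 0"
proof -
  have "xd * xb \<approx> smult (inverse q) (xb * xd)"
    using qcomm_db by (simp add: qcomm_def)
  also have "\<dots> \<approx> smult (inverse q) 0"
    by (intro equiv_mod_smult rel_bd_0)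
  finally show ?thesis
    by simp
qed

lemma Xp_Yp_0: "m \<noteq> 0 \<Longrightarrow> n \<noteq> 0 \<Longrightarrow> Xp m * Yp n \<approx> 0"
proof -
  assume "m \<noteq> 0" "n \<noteq> 0"
  then obtain i j where "nat \<bar>m\<bar> = Suc i" "nat \<bar>n\<bar> = Suc j"
    by (metis gr0_implies_Suc nat_0_iff abs_ge_zero abs_eq_0 not_le_imp_less
        order_antisym_conv zero_less_nat_eq)
  with \<open>m \<noteq> 0\<close> \<open>n \<noteq> 0\<close> show ?thesis
    using equiv_mod_pow_mult_0[OF rel_ac_0, of i j] equiv_mod_pow_mult_0[OF rel_ab_0, of i j]
      equiv_mod_pow_mult_0[OF rel_dc_0, of i j] equiv_mod_pow_mult_0[OF rel_db_0, of i j]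
    by (cases "m > 0"; cases "n > 0") (auto simp: Xp_def Yp_def)
qed

lemma a_ad: "xa * (xa * xd) \<approx> xa * xD q"
proof -
  have "xa * xD q = xa * (xa * xd) - smult (inverse q) ((xa * xb) * xc)"
    by (simp add: xD_def right_diff_distrib mult.assoc)
  also have "\<dots> \<approx> xa * (xa * xd) - smult (inverse q) (0 * xc)"
    by (intro equiv_mod_diff equiv_mod_refl equiv_mod_smult equiv_mod_rmult rel_ab_0)
  finally show ?thesis
    by (simp add: equiv_mod_sym)
qed

lemma az: "xa * xz \<approx> xa"
proof -
  have "xa * xz = (xa * xDi) * (xa * xd)"
    by (simp add: xz_def mult.assoc)
  also have "\<dots> \<approx> smult 1 (xDi * xa) * (xa * xd)"
    using qcomm_aDi unfolding qcomm_def by (intro equiv_mod_rmult)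
  also have "\<dots> = xDi * (xa * (xa * xd))"
    by (simp add: mult.assoc)
  also have "\<dots> \<approx> xDi * (xa * xD q)"
    by (intro equiv_mod_lmult a_ad)
  also have "\<dots> \<approx> xDi * smult 1 (xD q * xa)"
    using qcomm_aD unfolding qcomm_def by (intro equiv_mod_lmult)
  also have "\<dots> = (xDi * xD q) * xa"
    by (simp add: mult.assoc)
  also have "\<dots> \<approx> 1 * xa"
    by (intro equiv_mod_rmult rel_Di_D)
  finally show ?thesis
    by simp
qed

lemma D_d: "xD q * xd \<approx> xa * xd * xd"
proof -
  have "xD q * xd = xa * xd * xd - smult (inverse q) (xb * (xc * xd))"
    by (simp add: xD_def left_diff_distrib mult.assoc)
  also have "\<dots> \<approx> xa * xd * xd - smult (inverse q) (xb * 0)"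
    by (intro equiv_mod_diff equiv_mod_refl equiv_mod_smult equiv_mod_lmult rel_cd_0)
  finally show ?thesis
    by simp
qed

lemma dz: "xd * xz \<approx> xd"
proof -
  have "xd * xz \<approx> smult 1 (xz * xd)"
    using qcomm_dz by (simp add: qcomm_def)
  also have "\<dots> = xDi * (xa * xd * xd)"
    by (simp add: xz_def mult.assoc)
  also have "\<dots> \<approx> xDi * (xD q * xd)"
    by (intro equiv_mod_lmult equiv_mod_sym[OF D_d])
  also have "\<dots> = (xDi * xD q) * xd"
    by (simp add: mult.assoc)
  also have "\<dots> \<approx> 1 * xd"
    by (intro equiv_mod_rmult rel_Di_D)
  finally show ?thesis
    by simp
qed

lemma zc_0: "xz * xc \<approx> 0" and zb_0: "xz * xb \<approx> 0"
proof -
  have "xz * xc = xDi * xa * (xd * xc)" "xz * xb = xDi * xa * (xd * xb)"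
    by (simp_all add: xz_def mult.assoc)
  then show "xz * xc \<approx> 0" "xz * xb \<approx> 0"
    using equiv_mod_lmult[OF rel_dc_0, of "xDi * xa"] equiv_mod_lmult[OF rel_db_0, of "xDi * xa"]
    by simp_all
qed

lemma z_pow: "xz ^ Suc l \<approx> xz"
proof (induct l)
  case (Suc l)
  have "xz ^ Suc (Suc l) = xDi * xa * (xd * xz ^ Suc l)"
    by (simp add: xz_def mult.assoc)
  also have "\<dots> \<approx> xDi * xa * (xd * xz)"
    by (intro equiv_mod_lmult Suc)
  also have "\<dots> \<approx> xz"
    using equiv_mod_lmult[OF dz, of "xDi * xa"] by (simp add: xz_def mult.assoc)
  finally show ?case .
qed simp

lemma zpow_Xp: "m \<noteq> 0 \<Longrightarrow> xz ^ l * Xp m \<approx> Xp m"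
proof (induct l)
  case (Suc l)
  obtain i where i: "nat \<bar>m\<bar> = Suc i"
    using Suc(2) by (cases "nat \<bar>m\<bar>") auto
  have "xz * Xp m \<approx> Xp m"
    using equiv_mod_absorb_pow[OF qcomm_za az, of i] equiv_mod_absorb_pow[OF qcomm_zd dz, of i] Suc(2) i
    by (cases "m > 0") (simp_all add: Xp_def)
  then have "xz ^ Suc l * Xp m \<approx> xz ^ l * Xp m"
    using equiv_mod_lmult by (simp add: mult.assoc power_Suc2 del: power_Suc)
  with Suc show ?case
    by (blast intro: equiv_mod_trans)
qed simp

lemma zpow_Yp_0: "n \<noteq> 0 \<Longrightarrow> xz ^ Suc l * Yp n \<approx> 0"
proof -
  assume "n \<noteq> 0"
  then obtain j where "nat \<bar>n\<bar> = Suc j"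
    by (cases "nat \<bar>n\<bar>") auto
  with \<open>n \<noteq> 0\<close> show ?thesis
    using equiv_mod_pow_mult_0[OF zc_0, of l j] equiv_mod_pow_mult_0[OF zb_0, of l j]
    by (cases "n > 0") (simp_all add: Yp_def)
qed

lemma Dp_in_span_DTmon: "span_mod R S2 (DTmon q) (Dp q k)"
proof -
  have "Dp q k = DTmon q (IZ k) + DTmon q (IZc k)"
    by (simp add: DTmon_def algebra_simps)
  then show ?thesis
    by (simp add: span_mod_add span_mod_base S2_def)
qed

lemma Dp_Xp_in_span_DTmon: "span_mod R S2 (DTmon q) (Dp q k * Xp m)"
proof -
  consider "m > 0" | "m < 0" | "m = 0"
    by linarith
  then show ?thesis
  proof cases
    case 1
    then have "Dp q k * Xp m = DTmon q (IA k (nat m))" "IA k (nat m) \<in> S2"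
      by (simp_all add: DTmon_def Xp_def S2_def)
    then show ?thesis
      by (simp add: span_mod_base)
  next
    case 2
    then have "Dp q k * Xp m = DTmon q (ID k (nat (- m)))" "ID k (nat (- m)) \<in> S2"
      by (simp_all add: DTmon_def Xp_def S2_def)
    then show ?thesis
      by (simp add: span_mod_base)
  qed (simp add: Xp_def Dp_in_span_DTmon)
qed

lemma Dp_Yp_in_span_DTmon: "span_mod R S2 (DTmon q) (Dp q k * Yp n)"
proof -
  consider "n > 0" | "n < 0" | "n = 0"
    by linarith
  then show ?thesis
  proof cases
    case 1
    then have "Dp q k * Yp n = DTmon q (IC k (nat n))" "IC k (nat n) \<in> S2"
      by (simp_all add: DTmon_def Yp_def S2_def)
    then show ?thesis
      by (simp add: span_mod_base)
  next
    case 2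
    then have "Dp q k * Yp n = DTmon q (IB k (nat (- n)))" "IB k (nat (- n)) \<in> S2"
      by (simp_all add: DTmon_def Yp_def S2_def)
    then show ?thesis
      by (simp add: span_mod_base)
  qed (simp add: Yp_def Dp_in_span_DTmon)
qed

lemma Mon_in_span_DTmon_Xp:
  assumes "m \<noteq> 0"
  shows "span_mod R S2 (DTmon q) (Mon q (k, l, m, n))"
proof -
  have "Mon q (k, l, m, n) \<approx> Dp q k * (Xp m * Yp n)"
    unfolding Mon_eq mult.assoc[symmetric, of "xz ^ l"]
    by (intro equiv_mod_lmult equiv_mod_rmult zpow_Xp assms)
  moreover have "span_mod R S2 (DTmon q) (Dp q k * (Xp m * Yp n))"
  proof (cases "n = 0")
    case True
    then show ?thesis
      by (simp add: Yp_def Dp_Xp_in_span_DTmon)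
  next
    case False
    then have "Dp q k * (Xp m * Yp n) \<approx> Dp q k * 0"
      using assms by (intro equiv_mod_lmult Xp_Yp_0)
    then show ?thesis
      by (simp add: span_mod_equiv span_mod_zero)
  qed
  ultimately show ?thesis
    by (rule span_mod_equiv)
qed

lemma Mon_in_span_DTmon_z: "span_mod R S2 (DTmon q) (Mon q (k, Suc l, 0, n))"
proof (cases "n = 0")
  case True
  have "Mon q (k, Suc l, 0, n) \<approx> Dp q k * xz"
    using True by (simp add: Mon_eq Xp_def Yp_def del: power_Suc) (intro equiv_mod_lmult z_pow)
  moreover have "Dp q k * xz = DTmon q (IZ k)" "IZ k \<in> S2"
    by (simp_all add: DTmon_def S2_def)
  ultimately show ?thesis
    by (metis span_mod_equiv span_mod_base)
next
  case False
  have "Mon q (k, Suc l, 0, n) \<approx> 0"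
    using equiv_mod_lmult[OF zpow_Yp_0[OF False], of "Dp q k" l]
    by (simp add: Mon_eq Xp_def del: power_Suc)
  then show ?thesis
    by (rule span_mod_equiv) (rule span_mod_zero)
qed

lemma Mon_in_span_DTmon: "span_mod R S2 (DTmon q) (Mon q i)"
proof -
  obtain k l m n where i: "i = (k, l, m, n)"
    by (cases i)
  consider "m \<noteq> 0" | "m = 0" "l = 0" | l' where "m = 0" "l = Suc l'"
    by (cases l) auto
  then show ?thesis
  proof cases
    case 1
    then show ?thesis
      by (simp add: i Mon_in_span_DTmon_Xp)
  next
    case 2
    then show ?thesis
      by (simp add: i Mon_eq Xp_def Dp_Yp_in_span_DTmon)
  next
    case 3
    then show ?thesis
      by (simp add: i Mon_in_span_DTmon_z)
  qed
qed

lemma span_DTmon: "span_mod R S2 (DTmon q) p"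
  using span_Mon Mon_in_span_DTmon by (rule span_mod_trans)

end

lemma alg_of_DTrels: "alg_of ` DTrels = {xa * xb, xa * xc, xc * xd, xb * xd}"
  by (simp add: DTrels_def alg_of_simps)

lemma dtq_if_subset:
  assumes "q \<noteq> 0" "Urels q \<union> DTrels \<subseteq> X"
  shows "dtq q (alg_of ` X)"
proof -
  have rel: "equiv_mod (alg_of ` X) x 0" if "x \<in> alg_of ` DTrels" for x
    using that assms(2) unfolding equiv_mod_def by (auto intro: ideal_gen.base)
  show ?thesis
    using assms
    by (intro dtq.intro dtq_axioms.intro uq2_if_Urels_subset) (auto intro: rel simp: alg_of_DTrels)
qed

section \<open>The quotient \<open>A(DT^2_q)\<close>: linear independence\<close>

type_synonym idx3 = "bool \<times> int \<times> int"

text \<open>Modulo the ideal, \<open>z\<close> and \<open>1 - z\<close> are complementary idempotents. On the image of \<open>z\<close>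
  the element \<open>D\<close> acts as \<open>ad\<close> and a basis is \<open>a\<^sup>i d\<^sup>j\<close>, indexed by \<open>(True, i, j)\<close>; on the
  image of \<open>1 - z\<close> it acts as \<open>-q\<^sup>-\<^sup>1 bc\<close> and a basis is \<open>c\<^sup>i b\<^sup>j\<close>, indexed by \<open>(False, i, j)\<close>
  (\<open>i, j \<in> \<int>\<close>). The operators below are left multiplication by the generators in these
  coordinates.\<close>

definition dt_a :: "idx3 vec \<Rightarrow> idx3 vec" where
  "dt_a y = (\<lambda>(b, i, j). if b then y (True, i - 1, j) else 0)"

definition dt_d :: "idx3 vec \<Rightarrow> idx3 vec" where
  "dt_d y = (\<lambda>(b, i, j). if b then y (True, i, j - 1) else 0)"

definition dt_b :: "complex \<Rightarrow> idx3 vec \<Rightarrow> idx3 vec" where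
  "dt_b q y = (\<lambda>(b, i, j). if b then 0 else qpow q (2 * i) * y (False, i, j - 1))"

definition dt_c :: "idx3 vec \<Rightarrow> idx3 vec" where
  "dt_c y = (\<lambda>(b, i, j). if b then 0 else y (False, i - 1, j))"

definition dt_Di :: "complex \<Rightarrow> idx3 vec \<Rightarrow> idx3 vec" where
  "dt_Di q y = (\<lambda>(b, i, j). if b then y (True, i + 1, j + 1)
     else - qpow q (- 1 - 2 * i) * y (False, i + 1, j + 1))"

definition dt_D :: "complex \<Rightarrow> idx3 vec \<Rightarrow> idx3 vec" where
  "dt_D q y = (\<lambda>(b, i, j). if b then y (True, i - 1, j - 1)
     else - qpow q (2 * i - 1) * y (False, i - 1, j - 1))"

lemmas dt_defs = dt_a_def dt_b_def dt_c_def dt_d_def dt_Di_def dt_D_def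

lemma dt_relations:
  assumes q: "q \<noteq> 0"
  shows "dt_a (dt_b q y) = (\<lambda>x. 0)" "dt_b q (dt_a y) = (\<lambda>x. 0)"
    and "dt_a (dt_c y) = (\<lambda>x. 0)" "dt_c (dt_a y) = (\<lambda>x. 0)"
    and "dt_c (dt_d y) = (\<lambda>x. 0)" "dt_d (dt_c y) = (\<lambda>x. 0)"
    and "dt_b q (dt_d y) = (\<lambda>x. 0)" "dt_d (dt_b q y) = (\<lambda>x. 0)"
    and "dt_a (dt_d y) = dt_d (dt_a y)"
    and "dt_b q (dt_c y) = (\<lambda>x. q ^ 2 * dt_c (dt_b q y) x)"
    and "(\<lambda>x. dt_a (dt_d y) x - inverse q * dt_b q (dt_c y) x) = dt_D q y"
    and "dt_D q (dt_Di q y) = y" "dt_Di q (dt_D q y) = y"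
  using q by (auto simp: fun_eq_iff dt_defs qpow_simps[OF q] field_simps power2_eq_square)

definition ops2 :: "complex \<Rightarrow> gen \<Rightarrow> idx3 vec \<Rightarrow> idx3 vec" where
  "ops2 q g = (case g of Ga \<Rightarrow> dt_a | Gb \<Rightarrow> dt_b q | Gc \<Rightarrow> dt_c | Gd \<Rightarrow> dt_d | GDi \<Rightarrow> dt_Di q)"

lemma linop_ops2: "linop (ops2 q g)"
  by (cases g) (auto simp: ops2_def linop_def dt_defs fun_eq_iff algebra_simps)

lemma linop_dt_D: "linop (dt_D q)"
  by (auto simp: linop_def dt_defs fun_eq_iff algebra_simps)

lemma rep_ops2_generators:
  "rep (ops2 q) xa = dt_a" "rep (ops2 q) xb = dt_b q" "rep (ops2 q) xc = dt_c"
  "rep (ops2 q) xd = dt_d" "rep (ops2 q) xDi = dt_Di q"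
  by (simp_all add: fun_eq_iff rep_gen ops2_def xa_def xb_def xc_def xd_def xDi_def)

lemmas rep_ops2_simps = rep_ops2_generators rep_mult[OF linop_ops2] rep_diff rep_smult rep_one

lemma rep_ops2_D: "q \<noteq> 0 \<Longrightarrow> rep (ops2 q) (xD q) = dt_D q"
  by (simp add: fun_eq_iff xD_def rep_ops2_simps dt_relations(11)[symmetric])

lemma rep_ops2_vanishes:
  assumes q: "q \<noteq> 0" and r: "r \<in> alg_of ` (Urels q \<union> DTrels)"
  shows "rep (ops2 q) r y = (\<lambda>x. 0)"
  using r unfolding image_Un alg_of_Urels
  by (auto simp: DTrels_def alg_of_simps rep_ops2_simps rep_ops2_D[OF q] dt_relations[OF q])

lemma funpow_diagonal_shift:
  assumes "linop f"
    and step: "\<And>b i j. \<exists>s. s \<noteq> 0 \<and> f (unit_vec (b, i, j)) = (\<lambda>x. s * unit_vec (b, i + d, j + d) x)"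
  shows "\<exists>s. s \<noteq> 0 \<and>
    (f ^^ n) (unit_vec (b, i, j)) = (\<lambda>x. s * unit_vec (b, i + int n * d, j + int n * d) x)"
proof (induct n)
  case 0
  show ?case
    by (intro exI[of _ 1]) simp
next
  case (Suc n)
  then obtain s where s: "s \<noteq> 0"
    "(f ^^ n) (unit_vec (b, i, j)) = (\<lambda>x. s * unit_vec (b, i + int n * d, j + int n * d) x)"
    by blast
  obtain t where t: "t \<noteq> 0"
    "f (unit_vec (b, i + int n * d, j + int n * d)) = (\<lambda>x. t * unit_vec (b, i + int (Suc n) * d, j + int (Suc n) * d) x)"
    using step[of b "i + int n * d" "j + int n * d"] by (auto simp: algebra_simps)
  have "(f ^^ Suc n) (unit_vec (b, i, j)) = (\<lambda>x. (s * t) * unit_vec (b, i + int (Suc n) * d, j + int (Suc n) * d) x)"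
    using s(2) t(2) linop_scale[OF assms(1), of s] by (simp add: mult.assoc)
  with s(1) t(1) show ?case
    by (intro exI[of _ "s * t"]) simp
qed

lemma dt_D_Di_unit_vec:
  "dt_D q (unit_vec (b, i, j)) =
     (\<lambda>x. (if b then 1 else - qpow q (2 * i + 1)) * unit_vec (b, i + 1, j + 1) x)"
  "dt_Di q (unit_vec (b, i, j)) =
     (\<lambda>x. (if b then 1 else - qpow q (1 - 2 * i)) * unit_vec (b, i + - 1, j + - 1) x)"
  by (auto simp: fun_eq_iff dt_defs unit_vec_def)

lemma rep_ops2_Dp:
  assumes q: "q \<noteq> 0"
  shows "\<exists>s. s \<noteq> 0 \<and> rep (ops2 q) (Dp q k) (unit_vec (b, i, j)) = (\<lambda>x. s * unit_vec (b, i + k, j + k) x)"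
proof -
  have D: "\<exists>s. s \<noteq> 0 \<and> dt_D q (unit_vec (b, i, j)) = (\<lambda>x. s * unit_vec (b, i + 1, j + 1) x)"
    for b i j
    unfolding dt_D_Di_unit_vec using qpow_simps(10)[OF q]
    by (intro exI[of _ "if b then 1 else - qpow q (2 * i + 1)"]) simp
  have Di: "\<exists>s. s \<noteq> 0 \<and> dt_Di q (unit_vec (b, i, j)) = (\<lambda>x. s * unit_vec (b, i + - 1, j + - 1) x)"
    for b i j
    unfolding dt_D_Di_unit_vec using qpow_simps(10)[OF q]
    by (intro exI[of _ "if b then 1 else - qpow q (1 - 2 * i)"]) simp
  from funpow_diagonal_shift[OF linop_dt_D D, of "nat k" b i j]
    funpow_diagonal_shift[OF linop_ops2[of q GDi, unfolded ops2_def, simplified] Di, of "nat (- k)" b i j]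
  show ?thesis
    by (auto simp: Dp_def rep_pow[OF linop_ops2] rep_ops2_D[OF q] rep_ops2_generators)
qed

definition dt_vac :: "idx3 vec" where
  "dt_vac = (\<lambda>x. unit_vec (True, 0, 0) x + unit_vec (False, 0, 0) x)"

lemma dt_unit_vec:
  "dt_a (unit_vec (True, i, j)) = unit_vec (True, i + 1, j)"
  "dt_d (unit_vec (True, i, j)) = unit_vec (True, i, j + 1)"
  "dt_c (unit_vec (False, i, j)) = unit_vec (False, i + 1, j)"
  "dt_b q (unit_vec (False, 0, j)) = unit_vec (False, 0, j + 1)"
  "dt_a dt_vac = unit_vec (True, 1, 0)" "dt_d dt_vac = unit_vec (True, 0, 1)"
  "dt_c dt_vac = unit_vec (False, 1, 0)" "dt_b q dt_vac = unit_vec (False, 0, 1)"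
  by (auto simp: fun_eq_iff dt_defs dt_vac_def unit_vec_def qpow_def)

lemma dt_funpow_unit_vec:
  "(dt_a ^^ n) (unit_vec (True, i, j)) = unit_vec (True, i + int n, j)"
  "(dt_d ^^ n) (unit_vec (True, i, j)) = unit_vec (True, i, j + int n)"
  "(dt_c ^^ n) (unit_vec (False, i, j)) = unit_vec (False, i + int n, j)"
  "(dt_b q ^^ n) (unit_vec (False, 0, j)) = unit_vec (False, 0, j + int n)"
  by (induct n) (auto simp: dt_unit_vec intro!: arg_cong[where f = unit_vec])

lemma rep_ops2_pow_vac:
  assumes "n > 0"
  shows "rep (ops2 q) (xa ^ n) dt_vac = unit_vec (True, int n, 0)"
    and "rep (ops2 q) (xd ^ n) dt_vac = unit_vec (True, 0, int n)"
    and "rep (ops2 q) (xc ^ n) dt_vac = unit_vec (False, int n, 0)"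
    and "rep (ops2 q) (xb ^ n) dt_vac = unit_vec (False, 0, int n)"
proof -
  obtain n' where n: "n = Suc n'"
    using assms by (cases n) auto
  show "rep (ops2 q) (xa ^ n) dt_vac = unit_vec (True, int n, 0)"
    "rep (ops2 q) (xd ^ n) dt_vac = unit_vec (True, 0, int n)"
    "rep (ops2 q) (xc ^ n) dt_vac = unit_vec (False, int n, 0)"
    "rep (ops2 q) (xb ^ n) dt_vac = unit_vec (False, 0, int n)"
    unfolding n rep_pow[OF linop_ops2] funpow_Suc_right comp_def
    by (auto simp: rep_ops2_generators dt_unit_vec dt_funpow_unit_vec intro!: arg_cong[where f = unit_vec])
qed

lemma rep_ops2_z_vac:
  "rep (ops2 q) xz dt_vac = unit_vec (True, 0, 0)"
  "rep (ops2 q) (1 - xz) dt_vac = unit_vec (False, 0, 0)"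
  by (auto simp: xz_def rep_ops2_simps fun_eq_iff dt_defs dt_vac_def unit_vec_def)

definition dt_pos :: "idx2 \<Rightarrow> idx3" where
  "dt_pos i = (case i of
      IA m n \<Rightarrow> (True, m + int n, m)
    | ID m n \<Rightarrow> (True, m, m + int n)
    | IZ m \<Rightarrow> (True, m, m)
    | IB m n \<Rightarrow> (False, m, m + int n)
    | IC m n \<Rightarrow> (False, m + int n, m)
    | IZc m \<Rightarrow> (False, m, m))"

lemma inj_on_dt_pos: "inj_on dt_pos S2"
  by (rule inj_onI) (auto simp: S2_def dt_pos_def split: idx2.splits)

lemma rep_ops2_DTmon:
  assumes q: "q \<noteq> 0" and i: "i \<in> S2"
  shows "\<exists>s. s \<noteq> 0 \<and> rep (ops2 q) (DTmon q i) dt_vac = (\<lambda>x. s * unit_vec (dt_pos i) x)"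
proof -
  have Dp_mult: "\<exists>s. s \<noteq> 0 \<and> rep (ops2 q) (Dp q m * X) dt_vac = (\<lambda>x. s * unit_vec (b, i + m, j + m) x)"
    if "rep (ops2 q) X dt_vac = unit_vec (b, i, j)" for m X b i j
    using rep_ops2_Dp[OF q, of m b i j] that by (simp add: rep_mult[OF linop_ops2])
  show ?thesis
  proof (cases i)
    case (IA m n)
    with i have "n > 0"
      by (auto simp: S2_def)
    from Dp_mult[OF rep_ops2_pow_vac(1)[OF this]] show ?thesis
      by (simp add: IA DTmon_def dt_pos_def add.commute)
  next
    case (ID m n)
    with i have "n > 0"
      by (auto simp: S2_def)
    from Dp_mult[OF rep_ops2_pow_vac(2)[OF this]] show ?thesis
      by (simp add: ID DTmon_def dt_pos_def add.commute)
  next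
    case (IC m n)
    with i have "n > 0"
      by (auto simp: S2_def)
    from Dp_mult[OF rep_ops2_pow_vac(3)[OF this]] show ?thesis
      by (simp add: IC DTmon_def dt_pos_def add.commute)
  next
    case (IB m n)
    with i have "n > 0"
      by (auto simp: S2_def)
    from Dp_mult[OF rep_ops2_pow_vac(4)[OF this]] show ?thesis
      by (simp add: IB DTmon_def dt_pos_def add.commute)
  next
    case (IZ m)
    from Dp_mult[OF rep_ops2_z_vac(1)] show ?thesis
      by (simp add: IZ DTmon_def dt_pos_def)
  next
    case (IZc m)
    from Dp_mult[OF rep_ops2_z_vac(2)] show ?thesis
      by (simp add: IZc DTmon_def dt_pos_def)
  qed
qed

lemma basis_mono2:
  assumes "q \<noteq> 0"
  shows "basis_mod (fa_ideal (Urels q \<union> DTrels)) S2 (mono2 q)"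
proof (rule basis_modI[where ops = "ops2 q" and v = dt_vac and pos = dt_pos])
  interpret dtq q "alg_of ` (Urels q \<union> DTrels)"
    using dtq_if_subset[OF assms] by simp
  show "span_mod (alg_of ` (Urels q \<union> DTrels)) S2 (\<lambda>i. alg_of (mono2 q i)) p" for p
    using span_DTmon by (simp add: alg_of_mono2)
qed (use assms in \<open>auto simp: Urels_def DTrels_def FA_mono2 linop_ops2 rep_ops2_vanishes
    alg_of_mono2 rep_ops2_DTmon inj_on_dt_pos\<close>)

theorem lemma1p2:
  fixes q :: complex
  assumes "cmod q = 1"
  shows "basis_mod (fa_ideal (Urels q)) UNIV (mono1 q) \<and>
         basis_mod (fa_ideal (Urels q \<union> DTrels)) S2 (mono2 q)"
proof -
  have "q \<noteq> 0"
    using assms by auto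
  then show ?thesis
    using basis_mono1 basis_mono2 by blast
qed

end
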